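(* Consider the reachability strategy-improvement algorithm described in the context, run on a concurrent game structure $G$ with target $T$ (with all states of $T\cup W_2$ absorbing), producing player-1 selectors $\gamma_0,\gamma_1,\gamma_2,\dots$ and valuations $v_i=\mathrm{val}_1^{\overline{\gamma}_i}(\mathrm{Reach}(T))$ (if the algorithm stops, the sequences are understood as constant from that point on). Then: (1) for all $i\ge 0$, $\overline{\gamma}_i\preceq\overline{\gamma}_{i+1}$; moreover, if $\overline{\gamma}_i=\overline{\gamma}_{i+1}$ then $\overline{\gamma}_i$ is an optimal strategy for $\mathrm{Reach}(T)$, i.e. $\mathrm{val}_1^{\overline{\gamma}_i}(\mathrm{Reach}(T))=\mathrm{val}_1(\mathrm{Reach}(T))$; (2) $\lim_{i\to\infty}v_i=\mathrm{val}_1(\mathrm{Reach}(T))$ pointwise.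
   Context: A concurrent game structure $G=(S,M,\Gamma_1,\Gamma_2,\delta)$: finite states $S$, finite moves $M$, nonempty move sets $\Gamma_1(s),\Gamma_2(s)\subseteq M$, and $\delta(s,a_1,a_2)\in\mathrm{Distr}(S)$ for $a_1\in\Gamma_1(s),a_2\in\Gamma_2(s)$ (moves chosen simultaneously and independently). A state $s$ is absorbing if $\delta(s,a_1,a_2)(s)=1$ for all moves. A selector for player $i$ assigns to each state $s$ a distribution $\xi(s)$ on $\Gamma_i(s)$; $\overline{\xi}$ is the memoryless strategy playing $\xi$ forever. Strategies are maps from finite histories to distributions on available moves; $\Pr_s^{\pi_1,\pi_2}$ is the induced measure on plays from $s$. $\mathrm{Reach}(T)$ is the set of plays visiting $T$. $\mathrm{val}_1^{\pi_1}(\mathrm{Reach}(T))(s)=\inf_{\pi_2}\Pr_s^{\pi_1,\pi_2}(\mathrm{Reach}(T))$ and $\mathrm{val}_1(\mathrm{Reach}(T))=\sup_{\pi_1}\mathrm{val}_1^{\pi_1}(\mathrm{Reach}(T))$; $\pi_1$ is optimal if $\mathrm{val}_1^{\pi_1}=\mathrm{val}_1$ at all states. A valuation is a map $v:S\to[0,1]$, compared pointwise. For selectors $\xi_1,\xi_2$: $\mathrm{Pre}_{\xi_1,\xi_2}(v)(s)=\sum_{a,b}\sum_{t}v(t)\,\delta(s,a,b)(t)\,\xi_1(s)(a)\,\xi_2(s)(b)$, $\mathrm{Pre}_{1:\xi_1}(v)(s)=\inf_{\xi_2}\mathrm{Pre}_{\xi_1,\xi_2}(v)(s)$, $\mathrm{Pre}_1(v)(s)=\sup_{\xi_1}\mathrm{Pre}_{1:\xi_1}(v)(s)$.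 $W_2=\{s:\mathrm{val}_1(\mathrm{Reach}(T))(s)=0\}$; standing assumption: all states in $T\cup W_2$ are absorbing. $\xi^{\mathrm{unif}}$ is the player-1 selector choosing all moves of $\Gamma_1(s)$ uniformly at random at each state. Preorder on player-1 strategies: $\pi_1\prec\pi_1'$ iff $\mathrm{val}_1^{\pi_1}(\mathrm{Reach}(T))\le\mathrm{val}_1^{\pi_1'}(\mathrm{Reach}(T))$ pointwise with strict inequality at some state; $\pi_1\preceq\pi_1'$ iff $\pi_1\prec\pi_1'$ or $\pi_1=\pi_1'$. The algorithm: $\gamma_0=\xi^{\mathrm{unif}}$, $v_0=\mathrm{val}_1^{\overline{\gamma}_0}(\mathrm{Reach}(T))$. At iteration $i$: let $I=\{s\in S\setminus(T\cup W_2):\mathrm{Pre}_1(v_i)(s)>v_i(s)\}$; let $\xi_1$ be a player-1 selector with $\mathrm{Pre}_{1:\xi_1}(v_i)(s)=\mathrm{Pre}_1(v_i)(s)$ for all $s\in I$; set $\gamma_{i+1}(s)=\gamma_i(s)$ for $s\notin I$ and $\gamma_{i+1}(s)=\xi_1(s)$ for $s\in I$; compute $v_{i+1}=\mathrm{val}_1^{\overline{\gamma}_{i+1}}(\mathrm{Reach}(T))$. The algorithm stops and returns $\overline{\gamma}_i$ when $I=\emptyset$. *)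

theory Defs
  imports "HOL-Probability.Probability"
begin

text \<open>Histories are nonempty lists of states (last element = current state).\<close>

type_synonym ('s,'m) strategy = "'s list \<Rightarrow> 'm pmf"
type_synonym ('s,'m) selector = "'s \<Rightarrow> 'm pmf"

definition strategies :: "('s \<Rightarrow> 'm set) \<Rightarrow> ('s,'m) strategy set" where
  "strategies G = {\<pi>. \<forall>h. h \<noteq> [] \<longrightarrow> set_pmf (\<pi> h) \<subseteq> G (last h)}"

definition selectors :: "('s \<Rightarrow> 'm set) \<Rightarrow> ('s,'m) selector set" where
  "selectors G = {\<xi>. \<forall>s. set_pmf (\<xi> s) \<subseteq> G s}"

definition memoryless :: "('s,'m) selector \<Rightarrow> ('s,'m) strategy" where
  "memoryless \<xi> = (\<lambda>h. \<xi> (last h))"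

definition unif_selector :: "('s \<Rightarrow> 'm set) \<Rightarrow> ('s,'m) selector" where
  "unif_selector G = (\<lambda>s. pmf_of_set (G s))"

definition absorbing :: "('s \<Rightarrow> 'm set) \<Rightarrow> ('s \<Rightarrow> 'm set) \<Rightarrow> ('s \<Rightarrow> 'm \<Rightarrow> 'm \<Rightarrow> 's pmf) \<Rightarrow> 's \<Rightarrow> bool" where
  "absorbing G1 G2 \<delta> s \<longleftrightarrow> (\<forall>a\<in>G1 s. \<forall>b\<in>G2 s. pmf (\<delta> s a b) s = 1)"

text \<open>Distribution of the play prefix of length n+1 (histories) from s under the
  strategy pair (moves chosen simultaneously and independently).\<close>
fun hist :: "('s \<Rightarrow> 'm \<Rightarrow> 'm \<Rightarrow> 's pmf) \<Rightarrow> 's \<Rightarrow> ('s,'m) strategy \<Rightarrow> ('s,'m) strategy \<Rightarrow> nat \<Rightarrow> 's list pmf" where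
  "hist \<delta> s \<pi>1 \<pi>2 0 = return_pmf [s]"
| "hist \<delta> s \<pi>1 \<pi>2 (Suc n) =
     hist \<delta> s \<pi>1 \<pi>2 n \<bind> (\<lambda>h. \<pi>1 h \<bind> (\<lambda>a. \<pi>2 h \<bind> (\<lambda>b.
        map_pmf (\<lambda>t. h @ [t]) (\<delta> (last h) a b))))"

text \<open>Pr_s^{pi1,pi2}(Reach T): the measure of the increasing union of the cylinder events
  "T visited within the first n steps", i.e. the supremum of their probabilities.\<close>
definition reach_prob :: "('s \<Rightarrow> 'm \<Rightarrow> 'm \<Rightarrow> 's pmf) \<Rightarrow> 's set \<Rightarrow> ('s,'m) strategy \<Rightarrow> ('s,'m) strategy \<Rightarrow> 's \<Rightarrow> real" where
  "reach_prob \<delta> T \<pi>1 \<pi>2 s = (SUP n. measure_pmf.prob (hist \<delta> s \<pi>1 \<pi>2 n) {h. set h \<inter> T \<noteq> {}})"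

definition val1_strat :: "('s \<Rightarrow> 'm set) \<Rightarrow> ('s \<Rightarrow> 'm \<Rightarrow> 'm \<Rightarrow> 's pmf) \<Rightarrow> 's set \<Rightarrow> ('s,'m) strategy \<Rightarrow> 's \<Rightarrow> real" where
  "val1_strat G2 \<delta> T \<pi>1 s = (INF \<pi>2\<in>strategies G2. reach_prob \<delta> T \<pi>1 \<pi>2 s)"

definition val1 :: "('s \<Rightarrow> 'm set) \<Rightarrow> ('s \<Rightarrow> 'm set) \<Rightarrow> ('s \<Rightarrow> 'm \<Rightarrow> 'm \<Rightarrow> 's pmf) \<Rightarrow> 's set \<Rightarrow> 's \<Rightarrow> real" where
  "val1 G1 G2 \<delta> T s = (SUP \<pi>1\<in>strategies G1. val1_strat G2 \<delta> T \<pi>1 s)"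

definition W2 :: "('s \<Rightarrow> 'm set) \<Rightarrow> ('s \<Rightarrow> 'm set) \<Rightarrow> ('s \<Rightarrow> 'm \<Rightarrow> 'm \<Rightarrow> 's pmf) \<Rightarrow> 's set \<Rightarrow> 's set" where
  "W2 G1 G2 \<delta> T = {s. val1 G1 G2 \<delta> T s = 0}"

definition Pre_sel :: "('s::finite \<Rightarrow> 'm::finite set) \<Rightarrow> ('s \<Rightarrow> 'm set) \<Rightarrow> ('s \<Rightarrow> 'm \<Rightarrow> 'm \<Rightarrow> 's pmf)
    \<Rightarrow> ('s,'m) selector \<Rightarrow> ('s,'m) selector \<Rightarrow> ('s \<Rightarrow> real) \<Rightarrow> 's \<Rightarrow> real" where
  "Pre_sel G1 G2 \<delta> \<xi>1 \<xi>2 v s =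
     (\<Sum>a\<in>G1 s. \<Sum>b\<in>G2 s. \<Sum>t\<in>UNIV. v t * pmf (\<delta> s a b) t * pmf (\<xi>1 s) a * pmf (\<xi>2 s) b)"

definition Pre1_sel :: "('s::finite \<Rightarrow> 'm::finite set) \<Rightarrow> ('s \<Rightarrow> 'm set) \<Rightarrow> ('s \<Rightarrow> 'm \<Rightarrow> 'm \<Rightarrow> 's pmf)
    \<Rightarrow> ('s,'m) selector \<Rightarrow> ('s \<Rightarrow> real) \<Rightarrow> 's \<Rightarrow> real" where
  "Pre1_sel G1 G2 \<delta> \<xi>1 v s = (INF \<xi>2\<in>selectors G2. Pre_sel G1 G2 \<delta> \<xi>1 \<xi>2 v s)"

definition Pre1 :: "('s::finite \<Rightarrow> 'm::finite set) \<Rightarrow> ('s \<Rightarrow> 'm set) \<Rightarrow> ('s \<Rightarrow> 'm \<Rightarrow> 'm \<Rightarrow> 's pmf)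
    \<Rightarrow> ('s \<Rightarrow> real) \<Rightarrow> 's \<Rightarrow> real" where
  "Pre1 G1 G2 \<delta> v s = (SUP \<xi>1\<in>selectors G1. Pre1_sel G1 G2 \<delta> \<xi>1 v s)"

definition strat_less :: "('s \<Rightarrow> 'm set) \<Rightarrow> ('s \<Rightarrow> 'm \<Rightarrow> 'm \<Rightarrow> 's pmf) \<Rightarrow> 's set
    \<Rightarrow> ('s,'m) strategy \<Rightarrow> ('s,'m) strategy \<Rightarrow> bool" where
  "strat_less G2 \<delta> T \<pi> \<pi>' \<longleftrightarrow>
     (\<forall>s. val1_strat G2 \<delta> T \<pi> s \<le> val1_strat G2 \<delta> T \<pi>' s) \<and>
     (\<exists>s. val1_strat G2 \<delta> T \<pi> s < val1_strat G2 \<delta> T \<pi>' s)"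

definition strat_le :: "('s \<Rightarrow> 'm set) \<Rightarrow> ('s \<Rightarrow> 'm \<Rightarrow> 'm \<Rightarrow> 's pmf) \<Rightarrow> 's set
    \<Rightarrow> ('s,'m) strategy \<Rightarrow> ('s,'m) strategy \<Rightarrow> bool" where
  "strat_le G2 \<delta> T \<pi> \<pi>' \<longleftrightarrow> strat_less G2 \<delta> T \<pi> \<pi>' \<or> \<pi> = \<pi>'"

text \<open>A run of the strategy-improvement algorithm: gamma 0 is uniform, and each step
  performs the improvement (when I is empty the step leaves gamma unchanged, so a
  stopped run is constant from then on).\<close>
definition improve_step :: "('s::finite \<Rightarrow> 'm::finite set) \<Rightarrow> ('s \<Rightarrow> 'm set) \<Rightarrow> ('s \<Rightarrow> 'm \<Rightarrow> 'm \<Rightarrow> 's pmf) \<Rightarrow> 's set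
    \<Rightarrow> ('s,'m) selector \<Rightarrow> ('s,'m) selector \<Rightarrow> bool" where
  "improve_step G1 G2 \<delta> T \<gamma> \<gamma>' \<longleftrightarrow>
     (let v = val1_strat G2 \<delta> T (memoryless \<gamma>);
          I = {s. s \<notin> T \<union> W2 G1 G2 \<delta> T \<and> Pre1 G1 G2 \<delta> v s > v s}
      in \<exists>\<xi>1\<in>selectors G1. (\<forall>s\<in>I. Pre1_sel G1 G2 \<delta> \<xi>1 v s = Pre1 G1 G2 \<delta> v s) \<and>
           \<gamma>' = (\<lambda>s. if s \<in> I then \<xi>1 s else \<gamma> s))"

definition algo_run :: "('s::finite \<Rightarrow> 'm::finite set) \<Rightarrow> ('s \<Rightarrow> 'm set) \<Rightarrow> ('s \<Rightarrow> 'm \<Rightarrow> 'm \<Rightarrow> 's pmf) \<Rightarrow> 's set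
    \<Rightarrow> (nat \<Rightarrow> ('s,'m) selector) \<Rightarrow> bool" where
  "algo_run G1 G2 \<delta> T \<gamma> \<longleftrightarrow>
     \<gamma> 0 = unif_selector G1 \<and> (\<forall>i. improve_step G1 G2 \<delta> T (\<gamma> i) (\<gamma> (Suc i)))"

end

theory Submission
  imports Defs
begin

text \<open>
  The value of a memoryless selector \<open>\<gamma>\<close> is a fixpoint of \<open>Pre_sel \<gamma>\<close> outside \<open>T\<close> (the
  Bellman equation). An improvement step switches to \<open>Pre1\<close>-optimal moves where \<open>Pre1\<close>
  exceeds the current value \<open>v\<close>, so \<open>v\<close> becomes a sub-fixpoint of \<open>Pre_sel \<gamma>'\<close> for the new
  selector \<open>\<gamma>'\<close>. If \<open>\<gamma>'\<close> is proper, i.e. player 2 cannot confine the play to a set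
  avoiding \<open>T \<union> W2\<close>, then \<open>T \<union> W2\<close> is reached almost surely, and such a sub-fixpoint is a
  lower bound for the value of \<open>\<gamma>'\<close>. The uniform selector is proper, since a set in which
  player 2 can confine every play lies in \<open>W2\<close>; improvement preserves properness, since a
  trap for \<open>\<gamma>'\<close> would contain a maximal level set of \<open>v\<close> that is a trap for \<open>\<gamma>\<close>. Hence the
  values increase, strictly whenever the selector changes.

  Conversely, every \<open>v\<close> with \<open>Pre1 v \<le> v\<close> and \<open>v = 1\<close> on \<open>T\<close> bounds \<open>val1\<close> from above:
  player 2 can answer any strategy so that \<open>v\<close> is a supermartingale up to summable errors.
  Both the value of a selector left unchanged by the algorithm and the limit of the increasing
  values are such super-fixpoints.
\<close>

lemma tendsto_Max_image:
  fixes f :: "'a \<Rightarrow> 'b \<Rightarrow> 'c::linorder_topology"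
  assumes "finite A" "A \<noteq> {}" "\<And>a. a \<in> A \<Longrightarrow> ((\<lambda>x. f x a) \<longlongrightarrow> l a) F"
  shows "((\<lambda>x. Max (f x ` A)) \<longlongrightarrow> Max (l ` A)) F"
  using assms
proof (induction A rule: finite_ne_induct)
  case (insert a A)
  then show ?case by (simp add: tendsto_max)
qed simp

lemma measure_bind_pmf_finite:
  fixes M :: "'a::finite pmf"
  shows "measure_pmf.prob (bind_pmf M N) X = (\<Sum>x\<in>UNIV. pmf M x * measure_pmf.prob (N x) X)"
proof -
  have "emeasure (measure_pmf (bind_pmf M N)) X = (\<integral>\<^sup>+x. emeasure (N x) X \<partial>M)" by simp
  also have "\<dots> = (\<Sum>x\<in>UNIV. emeasure (N x) X * pmf M x)"
    by (rule nn_integral_measure_pmf_support) auto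
  also have "\<dots> = ennreal (\<Sum>x\<in>UNIV. pmf M x * measure_pmf.prob (N x) X)"
    by (simp add: measure_pmf.emeasure_eq_measure ennreal_mult' mult.commute
        flip: sum_ennreal)
  finally show ?thesis
    by (simp add: measure_pmf.emeasure_eq_measure sum_nonneg)
qed

lemma pmf_eq_1_imp_set_pmf:
  assumes "pmf p s = 1" "t \<in> set_pmf p"
  shows "t = s"
proof (rule ccontr)
  assume "t \<noteq> s"
  then have "measure_pmf.prob p {s, t} = pmf p s + pmf p t"
    by (simp add: measure_measure_pmf_finite)
  moreover have "pmf p t > 0" using assms(2) by (simp add: pmf_positive)
  moreover have "measure_pmf.prob p {s, t} \<le> 1" by simp
  ultimately show False using assms(1) by simp
qed

definition shift_strategy :: "'s \<Rightarrow> ('s,'m) strategy \<Rightarrow> ('s,'m) strategy" where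
  "shift_strategy s \<pi> = (\<lambda>h. \<pi> (s # h))"

lemma selectors_support: "\<xi> \<in> selectors G \<Longrightarrow> set_pmf (\<xi> s) \<subseteq> G s"
  unfolding selectors_def by blast

lemma strategies_support: "\<pi> \<in> strategies G \<Longrightarrow> h \<noteq> [] \<Longrightarrow> set_pmf (\<pi> h) \<subseteq> G (last h)"
  unfolding strategies_def by blast

lemma fun_upd_selectors:
  "\<xi> \<in> selectors G \<Longrightarrow> set_pmf p \<subseteq> G s \<Longrightarrow> \<xi>(s := p) \<in> selectors G"
  unfolding selectors_def by auto

lemma unif_selector_selectors:
  fixes G :: "'s \<Rightarrow> 'm::finite set"
  assumes "\<And>s. G s \<noteq> {}"
  shows "unif_selector G \<in> selectors G"
  unfolding selectors_def unif_selector_def using assms by simp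

lemma memoryless_strategies: "\<xi> \<in> selectors G \<Longrightarrow> memoryless \<xi> \<in> strategies G"
  unfolding strategies_def selectors_def memoryless_def by simp

lemma memoryless_singleton [simp]: "memoryless \<gamma> [s] = \<gamma> s"
  unfolding memoryless_def by simp

lemma memoryless_eq_iff: "memoryless \<gamma> = memoryless \<gamma>' \<longleftrightarrow> \<gamma> = \<gamma>'"
proof
  assume "memoryless \<gamma> = memoryless \<gamma>'"
  then have "memoryless \<gamma> [s] = memoryless \<gamma>' [s]" for s by simp
  then show "\<gamma> = \<gamma>'" by auto
qed simp

lemma shift_strategy_strategies:
  assumes "\<pi> \<in> strategies G"
  shows "shift_strategy s \<pi> \<in> strategies G"
  unfolding strategies_def shift_strategy_def
proof (intro CollectI allI impI)
  fix h :: "'a list"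
  assume "h \<noteq> []"
  moreover have "set_pmf (\<pi> (s # h)) \<subseteq> G (last (s # h))"
    using strategies_support[OF assms] by blast
  ultimately show "set_pmf (\<pi> (s # h)) \<subseteq> G (last h)" by simp
qed

text \<open>Play according to \<open>\<xi>\<close> in the first step and according to \<open>P t\<close> once the successor \<open>t\<close>
  is reached.\<close>

definition cons_strategy :: "('s,'m) selector \<Rightarrow> ('s \<Rightarrow> ('s,'m) strategy) \<Rightarrow> ('s,'m) strategy" where
  "cons_strategy \<xi> P = (\<lambda>h. case tl h of [] \<Rightarrow> \<xi> (hd h) | t # _ \<Rightarrow> P t (tl h))"

lemma cons_strategy_singleton [simp]: "cons_strategy \<xi> P [s] = \<xi> s"
  unfolding cons_strategy_def by simp

lemma shift_strategy_cons_strategy: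
  "h \<noteq> [] \<Longrightarrow> shift_strategy s (cons_strategy \<xi> P) h = P (hd h) h"
  unfolding shift_strategy_def cons_strategy_def by (cases h) auto

lemma cons_strategy_strategies:
  assumes "\<xi> \<in> selectors G" "\<And>t. P t \<in> strategies G"
  shows "cons_strategy \<xi> P \<in> strategies G"
  unfolding strategies_def
proof (intro CollectI allI impI)
  fix h :: "'a list" assume "h \<noteq> []"
  then obtain x r where h: "h = x # r" by (cases h) auto
  show "set_pmf (cons_strategy \<xi> P h) \<subseteq> G (last h)"
  proof (cases r)
    case Nil
    then show ?thesis using h selectors_support[OF assms(1)] by (simp add: cons_strategy_def)
  next
    case (Cons y r')
    then show ?thesis
      using h strategies_support[OF assms(2), of "y # r'"] by (simp add: cons_strategy_def)
  qed
qed

lemma shift_strategy_memoryless: "h \<noteq> [] \<Longrightarrow> shift_strategy s (memoryless \<gamma>) h = memoryless \<gamma> h"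
  unfolding shift_strategy_def memoryless_def by simp

lemma set_pmf_hist: "h \<in> set_pmf (hist \<delta> s \<pi>1 \<pi>2 n) \<Longrightarrow> h \<noteq> [] \<and> hd h = s"
  by (induction n arbitrary: h) (auto simp: set_bind_pmf)

lemma hist_cong:
  assumes "\<And>h. h \<noteq> [] \<Longrightarrow> hd h = s \<Longrightarrow> \<pi>1 h = \<pi>1' h"
    and "\<And>h. h \<noteq> [] \<Longrightarrow> hd h = s \<Longrightarrow> \<pi>2 h = \<pi>2' h"
  shows "hist \<delta> s \<pi>1 \<pi>2 n = hist \<delta> s \<pi>1' \<pi>2' n"
proof (induction n)
  case (Suc n)
  show ?case
    by (simp add: Suc, rule bind_pmf_cong)
      (use set_pmf_hist[of _ \<delta> s \<pi>1' \<pi>2' n] assms in auto)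
qed simp

text \<open>\<open>hist\<close> unfolds the last step; this unfolds the first one.\<close>

lemma hist_Suc_shift:
  "hist \<delta> s \<pi>1 \<pi>2 (Suc n) = \<pi>1 [s] \<bind> (\<lambda>a. \<pi>2 [s] \<bind> (\<lambda>b. \<delta> s a b \<bind>
      (\<lambda>t. map_pmf ((#) s) (hist \<delta> t (shift_strategy s \<pi>1) (shift_strategy s \<pi>2) n))))"
proof (induction n)
  case 0
  then show ?case by (simp add: bind_return_pmf map_pmf_def)
next
  case (Suc n)
  define K where "K = (\<lambda>h. \<pi>1 h \<bind> (\<lambda>a. \<pi>2 h \<bind> (\<lambda>b.
        map_pmf (\<lambda>t. h @ [t]) (\<delta> (last h) a b))))"
  have K: "hist \<delta> s \<pi>1 \<pi>2 (Suc (Suc n)) = hist \<delta> s \<pi>1 \<pi>2 (Suc n) \<bind> K"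
    by (simp add: K_def)
  have Kt: "map_pmf ((#) s) (hist \<delta> t (shift_strategy s \<pi>1) (shift_strategy s \<pi>2) (Suc n))
      = hist \<delta> t (shift_strategy s \<pi>1) (shift_strategy s \<pi>2) n \<bind> (\<lambda>h. K (s # h))" for t
    by (simp add: map_bind_pmf, rule bind_pmf_cong)
      (use set_pmf_hist[of _ \<delta> t "shift_strategy s \<pi>1" "shift_strategy s \<pi>2" n]
        in \<open>auto simp: K_def shift_strategy_def map_bind_pmf pmf.map_comp o_def\<close>)
  show ?case
    unfolding K Suc Kt by (simp add: bind_assoc_pmf bind_map_pmf)
qed

definition joint_expect ::
    "'m::finite pmf \<Rightarrow> 'm pmf \<Rightarrow> ('m \<Rightarrow> 'm \<Rightarrow> 's::finite pmf) \<Rightarrow> ('s \<Rightarrow> real) \<Rightarrow> real" where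
  "joint_expect p q d f = (\<Sum>a\<in>UNIV. \<Sum>b\<in>UNIV. \<Sum>t\<in>UNIV. pmf p a * pmf q b * pmf (d a b) t * f t)"

lemma measure_hist_Suc:
  fixes \<delta> :: "'s::finite \<Rightarrow> 'm::finite \<Rightarrow> 'm \<Rightarrow> 's pmf"
  shows "measure_pmf.prob (hist \<delta> s \<pi>1 \<pi>2 (Suc n)) A = joint_expect (\<pi>1 [s]) (\<pi>2 [s]) (\<delta> s)
      (\<lambda>t. measure_pmf.prob (hist \<delta> t (shift_strategy s \<pi>1) (shift_strategy s \<pi>2) n) ((#) s -` A))"
  unfolding hist_Suc_shift joint_expect_def
  by (simp add: measure_bind_pmf_finite sum_distrib_left mult.assoc)

lemma joint_expect_mono: "(\<And>t. f t \<le> g t) \<Longrightarrow> joint_expect p q d f \<le> joint_expect p q d g"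
  unfolding joint_expect_def by (intro sum_mono mult_left_mono) auto

lemma joint_expect_mono_support:
  assumes "\<And>a b t. a \<in> set_pmf p \<Longrightarrow> b \<in> set_pmf q \<Longrightarrow> t \<in> set_pmf (d a b) \<Longrightarrow> f t \<le> g t"
  shows "joint_expect p q d f \<le> joint_expect p q d g"
  unfolding joint_expect_def
proof (intro sum_mono)
  fix a b t
  show "pmf p a * pmf q b * pmf (d a b) t * f t \<le> pmf p a * pmf q b * pmf (d a b) t * g t"
  proof (cases "a \<in> set_pmf p \<and> b \<in> set_pmf q \<and> t \<in> set_pmf (d a b)")
    case True
    then show ?thesis using assms by (intro mult_left_mono) auto
  next
    case False
    then show ?thesis by (auto simp: set_pmf_iff)
  qed
qed

lemma joint_expect_const [simp]: "joint_expect p q d (\<lambda>_. c) = c"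
proof -
  have "joint_expect p q d (\<lambda>_. c) =
      (\<Sum>a\<in>UNIV. \<Sum>b\<in>UNIV. c * pmf p a * pmf q b * (\<Sum>t\<in>UNIV. pmf (d a b) t))"
    unfolding joint_expect_def by (simp add: sum_distrib_left mult_ac)
  also have "\<dots> = c"
    by (simp add: sum_pmf_eq_1 flip: sum_distrib_left sum_distrib_right)
  finally show ?thesis .
qed

lemma joint_expect_diff:
  "joint_expect p q d (\<lambda>t. f t - g t) = joint_expect p q d f - joint_expect p q d g"
  unfolding joint_expect_def by (simp add: right_diff_distrib sum_subtractf)

lemma joint_expect_add:
  "joint_expect p q d (\<lambda>t. f t + g t) = joint_expect p q d f + joint_expect p q d g"
  unfolding joint_expect_def by (simp add: distrib_left sum.distrib)

lemma joint_expect_add_const: "joint_expect p q d (\<lambda>t. f t + c) = joint_expect p q d f + c"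
  by (simp add: joint_expect_add)

lemma joint_expect_nonneg: "(\<And>t. 0 \<le> f t) \<Longrightarrow> 0 \<le> joint_expect p q d f"
  using joint_expect_mono[of "\<lambda>_. 0" f] by simp

lemma joint_expect_le_const: "(\<And>t. f t \<le> c) \<Longrightarrow> joint_expect p q d f \<le> c"
  using joint_expect_mono[of f "\<lambda>_. c"] by simp

lemma tendsto_joint_expect:
  "(\<And>t. (\<lambda>n. f n t) \<longlonglongrightarrow> g t) \<Longrightarrow> (\<lambda>n. joint_expect p q d (f n)) \<longlonglongrightarrow> joint_expect p q d g"
  unfolding joint_expect_def by (intro tendsto_sum tendsto_mult_left)

lemma joint_expect_less:
  assumes le: "\<And>a b t. a \<in> set_pmf p \<Longrightarrow> b \<in> set_pmf q \<Longrightarrow> t \<in> set_pmf (d a b) \<Longrightarrow> f t \<le> g t"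
    and a: "a \<in> set_pmf p" and b: "b \<in> set_pmf q" and t: "t \<in> set_pmf (d a b)" and lt: "f t < g t"
  shows "joint_expect p q d f < joint_expect p q d g"
proof -
  let ?h = "\<lambda>t. max 0 (g t - f t)"
  let ?g = "\<lambda>a b t. pmf p a * pmf q b * pmf (d a b) t * ?h t"
  have g0: "0 \<le> ?g a' b' t'" for a' b' t' by simp
  have "0 < ?g a b t"
    using a b t lt by (simp add: pmf_positive)
  also have "\<dots> \<le> (\<Sum>t'\<in>UNIV. ?g a b t')"
    by (rule member_le_sum) auto
  also have "\<dots> \<le> (\<Sum>b'\<in>UNIV. \<Sum>t'\<in>UNIV. ?g a b' t')"
    by (rule member_le_sum[where f="\<lambda>b'. \<Sum>t'\<in>UNIV. ?g a b' t'"]) (auto intro: sum_nonneg g0)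
  also have "\<dots> \<le> joint_expect p q d ?h"
    unfolding joint_expect_def
    by (rule member_le_sum[where f="\<lambda>a'. \<Sum>b'\<in>UNIV. \<Sum>t'\<in>UNIV. ?g a' b' t'"])
      (auto intro: sum_nonneg g0)
  also have "\<dots> \<le> joint_expect p q d (\<lambda>t. g t - f t)"
    by (rule joint_expect_mono_support) (use le in force)
  finally show ?thesis by (simp add: joint_expect_diff)
qed

lemma joint_expect_return_le:
  assumes "\<And>a t. a \<in> set_pmf p \<Longrightarrow> t \<in> set_pmf (d a b) \<Longrightarrow> f t \<le> M"
  shows "joint_expect p (return_pmf b) d f \<le> M"
  using joint_expect_mono_support[of p "return_pmf b" d f "\<lambda>_. M"] assms by simp

lemma joint_expect_return_less:
  assumes "\<And>a t. a \<in> set_pmf p \<Longrightarrow> t \<in> set_pmf (d a b) \<Longrightarrow> f t \<le> M"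
    and "a \<in> set_pmf p" "t \<in> set_pmf (d a b)" "f t < M"
  shows "joint_expect p (return_pmf b) d f < M"
  using joint_expect_less[of p "return_pmf b" d f "\<lambda>_. M" a b t] assms by simp

lemma joint_expect_pure_decomp:
  "joint_expect p q d f = (\<Sum>b\<in>UNIV. pmf q b * joint_expect p (return_pmf b) d f)"
proof -
  have "joint_expect p (return_pmf b) d f = (\<Sum>a\<in>UNIV. \<Sum>t\<in>UNIV. pmf p a * pmf (d a b) t * f t)"
    for b
  proof -
    have "joint_expect p (return_pmf b) d f = (\<Sum>a\<in>UNIV. \<Sum>b'\<in>UNIV.
        (if b' = b then \<Sum>t\<in>UNIV. pmf p a * pmf (d a b') t * f t else 0))"
      unfolding joint_expect_def by (intro sum.cong refl) (auto simp: indicator_def)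
    then show ?thesis by (simp add: sum.delta')
  qed
  then have "(\<Sum>b\<in>UNIV. pmf q b * joint_expect p (return_pmf b) d f) =
      (\<Sum>b\<in>UNIV. \<Sum>a\<in>UNIV. \<Sum>t\<in>UNIV. pmf p a * pmf q b * pmf (d a b) t * f t)"
    by (simp add: sum_distrib_left mult_ac)
  also have "\<dots> = joint_expect p q d f"
    unfolding joint_expect_def by (rule sum.swap)
  finally show ?thesis by simp
qed

lemma joint_expect_le_Max_pure:
  assumes "set_pmf q \<subseteq> A" "finite A"
  shows "joint_expect p q d f \<le> Max ((\<lambda>b. joint_expect p (return_pmf b) d f) ` A)"
proof -
  let ?M = "Max ((\<lambda>b. joint_expect p (return_pmf b) d f) ` A)"
  have "joint_expect p q d f \<le> (\<Sum>b\<in>UNIV. pmf q b * ?M)"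
    unfolding joint_expect_pure_decomp[of p q]
  proof (rule sum_mono)
    fix b
    show "pmf q b * joint_expect p (return_pmf b) d f \<le> pmf q b * ?M"
    proof (cases "b \<in> A")
      case True
      then show ?thesis using assms(2) by (intro mult_left_mono) auto
    next
      case False
      then have "pmf q b = 0" using assms(1) by (auto simp: pmf_eq_0_set_pmf)
      then show ?thesis by simp
    qed
  qed
  also have "\<dots> = ?M" by (simp add: sum_pmf_eq_1 flip: sum_distrib_right)
  finally show ?thesis .
qed

lemma Pre_sel_eq_joint_expect:
  fixes G1 G2 :: "'s::finite \<Rightarrow> 'm::finite set"
  assumes "set_pmf (\<xi>1 s) \<subseteq> G1 s" "set_pmf (\<xi>2 s) \<subseteq> G2 s"
  shows "Pre_sel G1 G2 \<delta> \<xi>1 \<xi>2 v s = joint_expect (\<xi>1 s) (\<xi>2 s) (\<delta> s) v"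
proof -
  have z1: "pmf (\<xi>1 s) a = 0" if "a \<notin> G1 s" for a
    using assms(1) that by (auto simp: pmf_eq_0_set_pmf)
  have z2: "pmf (\<xi>2 s) b = 0" if "b \<notin> G2 s" for b
    using assms(2) that by (auto simp: pmf_eq_0_set_pmf)
  have "Pre_sel G1 G2 \<delta> \<xi>1 \<xi>2 v s = (\<Sum>a\<in>G1 s. \<Sum>b\<in>G2 s. \<Sum>t\<in>UNIV.
      pmf (\<xi>1 s) a * pmf (\<xi>2 s) b * pmf (\<delta> s a b) t * v t)"
    unfolding Pre_sel_def by (simp add: mult_ac)
  also have "\<dots> = (\<Sum>a\<in>UNIV. \<Sum>b\<in>G2 s. \<Sum>t\<in>UNIV.
      pmf (\<xi>1 s) a * pmf (\<xi>2 s) b * pmf (\<delta> s a b) t * v t)"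
    by (rule sum.mono_neutral_left) (use z1 in auto)
  also have "\<dots> = joint_expect (\<xi>1 s) (\<xi>2 s) (\<delta> s) v"
    unfolding joint_expect_def by (intro sum.cong refl sum.mono_neutral_left) (use z2 in auto)
  finally show ?thesis .
qed

lemma Pre_sel_cong:
  "\<xi>1 s = \<xi>1' s \<Longrightarrow> \<xi>2 s = \<xi>2' s \<Longrightarrow> Pre_sel G1 G2 \<delta> \<xi>1 \<xi>2 v s = Pre_sel G1 G2 \<delta> \<xi>1' \<xi>2' v s"
  unfolding Pre_sel_def by simp

subsection \<open>Reachability probabilities\<close>

definition hit_prob ::
    "('s \<Rightarrow> 'm \<Rightarrow> 'm \<Rightarrow> 's pmf) \<Rightarrow> 's set \<Rightarrow> ('s,'m) strategy \<Rightarrow> ('s,'m) strategy \<Rightarrow> 's \<Rightarrow> nat \<Rightarrow> real"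
  where "hit_prob \<delta> T \<pi>1 \<pi>2 s n = measure_pmf.prob (hist \<delta> s \<pi>1 \<pi>2 n) {h. set h \<inter> T \<noteq> {}}"

lemma hit_prob_0: "hit_prob \<delta> T \<pi>1 \<pi>2 s 0 = (if s \<in> T then 1 else 0)"
  unfolding hit_prob_def by auto

lemma hit_prob_Suc:
  fixes \<delta> :: "'s::finite \<Rightarrow> 'm::finite \<Rightarrow> 'm \<Rightarrow> 's pmf"
  shows "hit_prob \<delta> T \<pi>1 \<pi>2 s (Suc n) = (if s \<in> T then 1 else joint_expect (\<pi>1 [s]) (\<pi>2 [s]) (\<delta> s)
      (\<lambda>t. hit_prob \<delta> T (shift_strategy s \<pi>1) (shift_strategy s \<pi>2) t n))"
proof (cases "s \<in> T")
  case True
  then have "(#) s -` {h. set h \<inter> T \<noteq> {}} = UNIV" by auto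
  then show ?thesis using True unfolding hit_prob_def measure_hist_Suc by simp
next
  case False
  then have "(#) s -` {h. set h \<inter> T \<noteq> {}} = {h. set h \<inter> T \<noteq> {}}" by auto
  then show ?thesis using False unfolding hit_prob_def measure_hist_Suc by simp
qed

lemma hit_prob_nonneg: "0 \<le> hit_prob \<delta> T \<pi>1 \<pi>2 s n"
  and hit_prob_le_1: "hit_prob \<delta> T \<pi>1 \<pi>2 s n \<le> 1"
  unfolding hit_prob_def by auto

lemma hit_prob_cong:
  assumes "\<And>h. h \<noteq> [] \<Longrightarrow> hd h = s \<Longrightarrow> \<pi>1 h = \<pi>1' h"
    and "\<And>h. h \<noteq> [] \<Longrightarrow> hd h = s \<Longrightarrow> \<pi>2 h = \<pi>2' h"
  shows "hit_prob \<delta> T \<pi>1 \<pi>2 s n = hit_prob \<delta> T \<pi>1' \<pi>2' s n"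
proof -
  have "hist \<delta> s \<pi>1 \<pi>2 n = hist \<delta> s \<pi>1' \<pi>2' n"
    by (rule hist_cong) (use assms in auto)
  then show ?thesis unfolding hit_prob_def by simp
qed

lemma hit_prob_Suc_memoryless:
  fixes \<delta> :: "'s::finite \<Rightarrow> 'm::finite \<Rightarrow> 'm \<Rightarrow> 's pmf"
  shows "hit_prob \<delta> T (memoryless \<gamma>) \<pi>2 s (Suc n) = (if s \<in> T then 1 else
      joint_expect (\<gamma> s) (\<pi>2 [s]) (\<delta> s)
        (\<lambda>t. hit_prob \<delta> T (memoryless \<gamma>) (shift_strategy s \<pi>2) t n))"
proof -
  have "hit_prob \<delta> T (shift_strategy s (memoryless \<gamma>)) \<pi>2' t n =
      hit_prob \<delta> T (memoryless \<gamma>) \<pi>2' t n" for \<pi>2' t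
    by (rule hit_prob_cong) (simp_all add: shift_strategy_memoryless)
  then show ?thesis by (simp add: hit_prob_Suc)
qed

lemma incseq_hit_prob:
  fixes \<delta> :: "'s::finite \<Rightarrow> 'm::finite \<Rightarrow> 'm \<Rightarrow> 's pmf"
  shows "incseq (hit_prob \<delta> T \<pi>1 \<pi>2 s)"
proof (rule incseq_SucI)
  show "hit_prob \<delta> T \<pi>1 \<pi>2 s n \<le> hit_prob \<delta> T \<pi>1 \<pi>2 s (Suc n)" for n
  proof (induction n arbitrary: s \<pi>1 \<pi>2)
    case 0
    then show ?case by (simp add: hit_prob_0 hit_prob_Suc joint_expect_nonneg hit_prob_nonneg)
  next
    case (Suc n)
    then show ?case by (subst (1 2) hit_prob_Suc) (auto intro!: joint_expect_mono)
  qed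
qed

lemma hit_prob_tendsto_reach_prob:
  fixes \<delta> :: "'s::finite \<Rightarrow> 'm::finite \<Rightarrow> 'm \<Rightarrow> 's pmf"
  shows "hit_prob \<delta> T \<pi>1 \<pi>2 s \<longlonglongrightarrow> reach_prob \<delta> T \<pi>1 \<pi>2 s"
  unfolding reach_prob_def hit_prob_def[symmetric]
  by (rule LIMSEQ_incseq_SUP) (auto intro!: incseq_hit_prob bdd_aboveI[of _ 1] hit_prob_le_1)

lemma hit_prob_le_reach_prob:
  fixes \<delta> :: "'s::finite \<Rightarrow> 'm::finite \<Rightarrow> 'm \<Rightarrow> 's pmf"
  shows "hit_prob \<delta> T \<pi>1 \<pi>2 s n \<le> reach_prob \<delta> T \<pi>1 \<pi>2 s"
  using incseq_hit_prob hit_prob_tendsto_reach_prob by (rule incseq_le)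

lemma reach_prob_le_1:
  fixes \<delta> :: "'s::finite \<Rightarrow> 'm::finite \<Rightarrow> 'm \<Rightarrow> 's pmf"
  shows "reach_prob \<delta> T \<pi>1 \<pi>2 s \<le> 1"
  using hit_prob_tendsto_reach_prob by (rule LIMSEQ_le_const2) (blast intro: hit_prob_le_1)

lemma reach_prob_nonneg:
  fixes \<delta> :: "'s::finite \<Rightarrow> 'm::finite \<Rightarrow> 'm \<Rightarrow> 's pmf"
  shows "0 \<le> reach_prob \<delta> T \<pi>1 \<pi>2 s"
  using hit_prob_nonneg hit_prob_le_reach_prob by (rule order_trans)

lemma reach_prob_step:
  fixes \<delta> :: "'s::finite \<Rightarrow> 'm::finite \<Rightarrow> 'm \<Rightarrow> 's pmf"
  assumes "s \<notin> T"
  shows "reach_prob \<delta> T \<pi>1 \<pi>2 s = joint_expect (\<pi>1 [s]) (\<pi>2 [s]) (\<delta> s)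
      (reach_prob \<delta> T (shift_strategy s \<pi>1) (shift_strategy s \<pi>2))"
proof (rule LIMSEQ_unique)
  show "(\<lambda>n. hit_prob \<delta> T \<pi>1 \<pi>2 s (Suc n)) \<longlonglongrightarrow> reach_prob \<delta> T \<pi>1 \<pi>2 s"
    using hit_prob_tendsto_reach_prob by (rule LIMSEQ_Suc)
  show "(\<lambda>n. hit_prob \<delta> T \<pi>1 \<pi>2 s (Suc n)) \<longlonglongrightarrow> joint_expect (\<pi>1 [s]) (\<pi>2 [s]) (\<delta> s)
      (reach_prob \<delta> T (shift_strategy s \<pi>1) (shift_strategy s \<pi>2))"
    unfolding hit_prob_Suc using assms
    by (simp add: tendsto_joint_expect hit_prob_tendsto_reach_prob)
qed

lemma reach_prob_cong:
  assumes "\<And>h. h \<noteq> [] \<Longrightarrow> hd h = s \<Longrightarrow> \<pi>1 h = \<pi>1' h"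
    and "\<And>h. h \<noteq> [] \<Longrightarrow> hd h = s \<Longrightarrow> \<pi>2 h = \<pi>2' h"
  shows "reach_prob \<delta> T \<pi>1 \<pi>2 s = reach_prob \<delta> T \<pi>1' \<pi>2' s"
proof -
  have "hist \<delta> s \<pi>1 \<pi>2 n = hist \<delta> s \<pi>1' \<pi>2' n" for n
    by (rule hist_cong) (use assms in auto)
  then show ?thesis unfolding reach_prob_def by simp
qed

locale game =
  fixes G1 G2 :: "'s::finite \<Rightarrow> 'm::finite set"
    and \<delta> :: "'s \<Rightarrow> 'm \<Rightarrow> 'm \<Rightarrow> 's pmf"
    and T :: "'s set"
  assumes G1_ne: "\<And>s. G1 s \<noteq> {}"
    and G2_ne: "\<And>s. G2 s \<noteq> {}"
begin

lemma unif_selector_G1: "unif_selector G1 \<in> selectors G1"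
  using G1_ne by (rule unif_selector_selectors)

lemma unif_selector_G2: "unif_selector G2 \<in> selectors G2"
  using G2_ne by (rule unif_selector_selectors)

lemma strategies_G1_ne: "strategies G1 \<noteq> {}"
  using memoryless_strategies[OF unif_selector_G1] by blast

lemma strategies_G2_ne: "strategies G2 \<noteq> {}"
  using memoryless_strategies[OF unif_selector_G2] by blast

lemma selectors_G1_ne: "selectors G1 \<noteq> {}"
  using unif_selector_G1 by blast

lemma selectors_G2_ne: "selectors G2 \<noteq> {}"
  using unif_selector_G2 by blast

lemma bdd_below_reach_prob: "bdd_below ((\<lambda>\<pi>2. reach_prob \<delta> T \<pi>1 \<pi>2 s) ` A)"
  by (rule bdd_belowI[of _ 0]) (auto simp: reach_prob_nonneg)

lemma val1_strat_le_reach_prob: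
  "\<pi>2 \<in> strategies G2 \<Longrightarrow> val1_strat G2 \<delta> T \<pi>1 s \<le> reach_prob \<delta> T \<pi>1 \<pi>2 s"
  unfolding val1_strat_def by (rule cINF_lower[OF bdd_below_reach_prob])

lemma val1_strat_nonneg: "0 \<le> val1_strat G2 \<delta> T \<pi>1 s"
  unfolding val1_strat_def
  by (rule cINF_greatest[OF strategies_G2_ne]) (simp add: reach_prob_nonneg)

lemma val1_strat_le_1: "val1_strat G2 \<delta> T \<pi>1 s \<le> 1"
proof -
  obtain \<pi>2 where "\<pi>2 \<in> strategies G2" using strategies_G2_ne by blast
  then show ?thesis using val1_strat_le_reach_prob reach_prob_le_1 order_trans by blast
qed

lemma val1_strat_approx:
  assumes "e > 0"
  obtains \<pi>2 where "\<pi>2 \<in> strategies G2" "reach_prob \<delta> T \<pi>1 \<pi>2 s < val1_strat G2 \<delta> T \<pi>1 s + e"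
proof -
  have "val1_strat G2 \<delta> T \<pi>1 s < val1_strat G2 \<delta> T \<pi>1 s + e" using assms by simp
  then show ?thesis
    using that cINF_less_iff[OF strategies_G2_ne bdd_below_reach_prob] unfolding val1_strat_def
    by blast
qed

lemma val1_strat_target: "s \<in> T \<Longrightarrow> val1_strat G2 \<delta> T \<pi>1 s = 1"
proof -
  assume s: "s \<in> T"
  have "1 \<le> val1_strat G2 \<delta> T \<pi>1 s"
    unfolding val1_strat_def
  proof (rule cINF_greatest[OF strategies_G2_ne])
    show "1 \<le> reach_prob \<delta> T \<pi>1 \<pi>2 s" for \<pi>2
      using hit_prob_le_reach_prob[of \<delta> T \<pi>1 \<pi>2 s 0] s by (simp add: hit_prob_0)
  qed
  then show ?thesis using val1_strat_le_1 by (rule antisym[rotated])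
qed

lemma val1_strat_le_val1:
  "\<pi>1 \<in> strategies G1 \<Longrightarrow> val1_strat G2 \<delta> T \<pi>1 s \<le> val1 G1 G2 \<delta> T s"
  unfolding val1_def by (rule cSUP_upper) (auto intro!: bdd_aboveI[of _ 1] val1_strat_le_1)

lemma val1_nonneg: "0 \<le> val1 G1 G2 \<delta> T s"
  using strategies_G1_ne val1_strat_le_val1 val1_strat_nonneg
  by (meson all_not_in_conv order_trans)

lemma val1_leI:
  "(\<And>\<pi>1. \<pi>1 \<in> strategies G1 \<Longrightarrow> val1_strat G2 \<delta> T \<pi>1 s \<le> x) \<Longrightarrow> val1 G1 G2 \<delta> T s \<le> x"
  unfolding val1_def by (rule cSUP_least[OF strategies_G1_ne])

lemma Pre_sel_eq_joint_expect_selectors: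
  "\<xi>1 \<in> selectors G1 \<Longrightarrow> \<xi>2 \<in> selectors G2 \<Longrightarrow>
    Pre_sel G1 G2 \<delta> \<xi>1 \<xi>2 v s = joint_expect (\<xi>1 s) (\<xi>2 s) (\<delta> s) v"
  by (intro Pre_sel_eq_joint_expect selectors_support)

lemma bdd_below_Pre_sel:
  "(\<And>t. 0 \<le> v t) \<Longrightarrow> bdd_below ((\<lambda>\<xi>2. Pre_sel G1 G2 \<delta> \<xi>1 \<xi>2 v s) ` A)"
  unfolding Pre_sel_def by (rule bdd_belowI[of _ 0]) (auto intro!: sum_nonneg)

lemma Pre1_sel_le_Pre_sel:
  "(\<And>t. 0 \<le> v t) \<Longrightarrow> \<xi>2 \<in> selectors G2 \<Longrightarrow> Pre1_sel G1 G2 \<delta> \<xi>1 v s \<le> Pre_sel G1 G2 \<delta> \<xi>1 \<xi>2 v s"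
  unfolding Pre1_sel_def by (rule cINF_lower[OF bdd_below_Pre_sel])

lemma Pre1_sel_approx:
  assumes "\<And>t. 0 \<le> v t" "e > 0"
  obtains \<xi>2 where "\<xi>2 \<in> selectors G2" "Pre_sel G1 G2 \<delta> \<xi>1 \<xi>2 v s < Pre1_sel G1 G2 \<delta> \<xi>1 v s + e"
proof -
  have "bdd_below ((\<lambda>\<xi>2. Pre_sel G1 G2 \<delta> \<xi>1 \<xi>2 v s) ` selectors G2)"
    by (rule bdd_below_Pre_sel) (rule assms(1))
  moreover have "Pre1_sel G1 G2 \<delta> \<xi>1 v s < Pre1_sel G1 G2 \<delta> \<xi>1 v s + e" using assms by simp
  ultimately show ?thesis
    using that cINF_less_iff[OF selectors_G2_ne] unfolding Pre1_sel_def by blast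
qed

lemma Pre1_sel_le_Pre1:
  assumes "\<xi>1 \<in> selectors G1" "\<And>t. 0 \<le> v t" "\<And>t. v t \<le> B"
  shows "Pre1_sel G1 G2 \<delta> \<xi>1 v s \<le> Pre1 G1 G2 \<delta> v s"
  unfolding Pre1_def
proof (rule cSUP_upper[OF assms(1)], rule bdd_aboveI)
  fix x assume "x \<in> (\<lambda>\<xi>1. Pre1_sel G1 G2 \<delta> \<xi>1 v s) ` selectors G1"
  then obtain \<xi>1' where "\<xi>1' \<in> selectors G1" "x = Pre1_sel G1 G2 \<delta> \<xi>1' v s" by blast
  moreover have "Pre_sel G1 G2 \<delta> \<xi>1' (unif_selector G2) v s \<le> B"
    using \<open>\<xi>1' \<in> selectors G1\<close> assms(3)
    by (simp add: Pre_sel_eq_joint_expect_selectors unif_selector_G2 joint_expect_le_const)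
  ultimately show "x \<le> B"
    using Pre1_sel_le_Pre_sel[of v, OF assms(2) unif_selector_G2, of \<xi>1' s] by linarith
qed

lemma Pre1_leI:
  "(\<And>\<xi>1. \<xi>1 \<in> selectors G1 \<Longrightarrow> Pre1_sel G1 G2 \<delta> \<xi>1 v s \<le> x) \<Longrightarrow> Pre1 G1 G2 \<delta> v s \<le> x"
  unfolding Pre1_def by (rule cSUP_least[OF selectors_G1_ne])

lemma Pre1_sel_mono:
  assumes "\<xi>1 \<in> selectors G1" "\<And>t. 0 \<le> v t" "\<And>t. v t \<le> w t"
  shows "Pre1_sel G1 G2 \<delta> \<xi>1 v s \<le> Pre1_sel G1 G2 \<delta> \<xi>1 w s"
  unfolding Pre1_sel_def[of _ _ _ _ w]
proof (rule cINF_greatest[OF selectors_G2_ne])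
  fix \<xi>2 assume \<xi>2: "\<xi>2 \<in> selectors G2"
  have "Pre1_sel G1 G2 \<delta> \<xi>1 v s \<le> Pre_sel G1 G2 \<delta> \<xi>1 \<xi>2 v s"
    using assms(2) \<xi>2 by (rule Pre1_sel_le_Pre_sel)
  also have "\<dots> \<le> Pre_sel G1 G2 \<delta> \<xi>1 \<xi>2 w s"
    using assms(1,3) \<xi>2 by (simp add: Pre_sel_eq_joint_expect_selectors joint_expect_mono)
  finally show "Pre1_sel G1 G2 \<delta> \<xi>1 v s \<le> Pre_sel G1 G2 \<delta> \<xi>1 \<xi>2 w s" .
qed

lemma Pre1_mono:
  assumes "\<And>t. 0 \<le> v t" "\<And>t. v t \<le> w t" "\<And>t. w t \<le> B"
  shows "Pre1 G1 G2 \<delta> v s \<le> Pre1 G1 G2 \<delta> w s"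
proof (rule Pre1_leI)
  fix \<xi>1 assume \<xi>1: "\<xi>1 \<in> selectors G1"
  have "0 \<le> w t" for t using assms(1,2) order_trans by blast
  with \<xi>1 assms show "Pre1_sel G1 G2 \<delta> \<xi>1 v s \<le> Pre1 G1 G2 \<delta> w s"
    by (meson Pre1_sel_mono Pre1_sel_le_Pre1 order_trans)
qed

lemma Pre1_add_const_le:
  assumes "\<And>t. 0 \<le> v t" "\<And>t. v t \<le> B" "0 \<le> c"
  shows "Pre1 G1 G2 \<delta> (\<lambda>t. v t + c) s \<le> Pre1 G1 G2 \<delta> v s + c"
proof (rule Pre1_leI)
  fix \<xi>1 assume \<xi>1: "\<xi>1 \<in> selectors G1"
  have "Pre1_sel G1 G2 \<delta> \<xi>1 (\<lambda>t. v t + c) s - c \<le> Pre1_sel G1 G2 \<delta> \<xi>1 v s"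
    unfolding Pre1_sel_def[of _ _ _ _ v]
  proof (rule cINF_greatest[OF selectors_G2_ne])
    fix \<xi>2 assume \<xi>2: "\<xi>2 \<in> selectors G2"
    have "Pre1_sel G1 G2 \<delta> \<xi>1 (\<lambda>t. v t + c) s \<le> Pre_sel G1 G2 \<delta> \<xi>1 \<xi>2 (\<lambda>t. v t + c) s"
      using Pre1_sel_le_Pre_sel[OF _ \<xi>2] assms by (simp add: add_nonneg_nonneg)
    also have "\<dots> = Pre_sel G1 G2 \<delta> \<xi>1 \<xi>2 v s + c"
      using \<xi>1 \<xi>2 by (simp add: Pre_sel_eq_joint_expect_selectors joint_expect_add_const)
    finally show "Pre1_sel G1 G2 \<delta> \<xi>1 (\<lambda>t. v t + c) s - c \<le> Pre_sel G1 G2 \<delta> \<xi>1 \<xi>2 v s"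
      by simp
  qed
  also have "\<dots> \<le> Pre1 G1 G2 \<delta> v s"
    using \<xi>1 assms(1,2) by (rule Pre1_sel_le_Pre1)
  finally show "Pre1_sel G1 G2 \<delta> \<xi>1 (\<lambda>t. v t + c) s \<le> Pre1 G1 G2 \<delta> v s + c" by simp
qed

text \<open>\<open>Pre1\<close> is monotone and increases by at most \<open>c\<close> when its argument increases by \<open>c\<close>; hence
  it passes to the limit of an increasing sequence.\<close>

lemma Pre1_le_limit:
  assumes v0: "\<And>i t. 0 \<le> v i t" and v1: "\<And>i t. v i t \<le> 1"
    and inc: "\<And>t. incseq (\<lambda>i. v i t)" and lim: "\<And>t. (\<lambda>i. v i t) \<longlonglongrightarrow> L t"
    and pre: "\<And>i t. Pre1 G1 G2 \<delta> (v i) t \<le> v (Suc i) t"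
  shows "Pre1 G1 G2 \<delta> L s \<le> L s"
proof -
  have le_L: "v i t \<le> L t" for i t using inc lim by (rule incseq_le)
  define c where "c i = (\<Sum>t\<in>UNIV. L t - v i t)" for i
  have c_nonneg: "0 \<le> c i" for i unfolding c_def using le_L by (simp add: sum_nonneg)
  have L_le: "L t \<le> v i t + c i" for i t
    using member_le_sum[of t UNIV "\<lambda>t. L t - v i t"] le_L unfolding c_def by simp
  have "c \<longlonglongrightarrow> (\<Sum>t\<in>UNIV. L t - L t)"
    unfolding c_def by (intro tendsto_sum tendsto_diff tendsto_const lim)
  then have c_0: "c \<longlonglongrightarrow> 0" by simp
  have "Pre1 G1 G2 \<delta> L s - L s \<le> c i" for i
  proof -
    have "Pre1 G1 G2 \<delta> L s \<le> Pre1 G1 G2 \<delta> (\<lambda>t. v i t + c i) s"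
      using order_trans[OF v0 le_L] L_le v1 by (intro Pre1_mono[where B="1 + c i"]) auto
    also have "\<dots> \<le> Pre1 G1 G2 \<delta> (v i) s + c i"
      using v0 v1 c_nonneg by (rule Pre1_add_const_le)
    also have "\<dots> \<le> L s + c i"
      using pre[of i s] le_L[of "Suc i" s] by simp
    finally show ?thesis by simp
  qed
  then have "Pre1 G1 G2 \<delta> L s - L s \<le> 0"
    using c_0 by (intro LIMSEQ_le_const) auto
  then show ?thesis by simp
qed

lemma Pre_sel_absorbing:
  assumes "absorbing G1 G2 \<delta> s" "\<xi>1 \<in> selectors G1" "\<xi>2 \<in> selectors G2"
  shows "Pre_sel G1 G2 \<delta> \<xi>1 \<xi>2 v s = v s"
proof -
  have "t = s" if "a \<in> set_pmf (\<xi>1 s)" "b \<in> set_pmf (\<xi>2 s)" "t \<in> set_pmf (\<delta> s a b)" for a b t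
  proof (rule pmf_eq_1_imp_set_pmf)
    have "a \<in> G1 s" "b \<in> G2 s"
      using that selectors_support[OF assms(2)] selectors_support[OF assms(3)] by blast+
    then show "pmf (\<delta> s a b) s = 1"
      using assms(1) unfolding absorbing_def by blast
  qed (use that in simp)
  then have "joint_expect (\<xi>1 s) (\<xi>2 s) (\<delta> s) v = joint_expect (\<xi>1 s) (\<xi>2 s) (\<delta> s) (\<lambda>_. v s)"
    by (intro antisym joint_expect_mono_support) auto
  then show ?thesis using assms(2,3) by (simp add: Pre_sel_eq_joint_expect_selectors)
qed

lemma Pre1_absorbing:
  assumes "absorbing G1 G2 \<delta> s"
  shows "Pre1 G1 G2 \<delta> v s = v s"
proof -
  have "Pre1_sel G1 G2 \<delta> \<xi>1 v s = v s" if "\<xi>1 \<in> selectors G1" for \<xi>1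
    unfolding Pre1_sel_def using Pre_sel_absorbing[OF assms that] selectors_G2_ne by simp
  then show ?thesis unfolding Pre1_def using selectors_G1_ne by simp
qed

abbreviation val_sel :: "('s,'m) selector \<Rightarrow> 's \<Rightarrow> real" where
  "val_sel \<gamma> \<equiv> val1_strat G2 \<delta> T (memoryless \<gamma>)"

lemma val_sel_le_Pre_sel:
  assumes \<gamma>: "\<gamma> \<in> selectors G1" and s: "s \<notin> T" and \<xi>2: "\<xi>2 \<in> selectors G2"
  shows "val_sel \<gamma> s \<le> Pre_sel G1 G2 \<delta> \<gamma> \<xi>2 (val_sel \<gamma>) s"
proof (rule field_le_epsilon)
  fix e :: real assume e: "0 < e"
  have "\<forall>t. \<exists>\<pi>\<in>strategies G2. reach_prob \<delta> T (memoryless \<gamma>) \<pi> t < val_sel \<gamma> t + e"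
    using val1_strat_approx[OF e] by metis
  then obtain P where P: "\<And>t. P t \<in> strategies G2"
    and P_approx: "\<And>t. reach_prob \<delta> T (memoryless \<gamma>) (P t) t < val_sel \<gamma> t + e"
    by metis
  let ?\<pi>2 = "cons_strategy \<xi>2 P"
  have shift: "reach_prob \<delta> T (shift_strategy s (memoryless \<gamma>)) (shift_strategy s ?\<pi>2) =
      (\<lambda>t. reach_prob \<delta> T (memoryless \<gamma>) (P t) t)"
    by (rule ext, rule reach_prob_cong)
      (simp_all add: shift_strategy_memoryless shift_strategy_cons_strategy)
  have "val_sel \<gamma> s \<le> reach_prob \<delta> T (memoryless \<gamma>) ?\<pi>2 s"
    using cons_strategy_strategies[OF \<xi>2 P] by (rule val1_strat_le_reach_prob)
  also have "\<dots> = joint_expect (\<gamma> s) (\<xi>2 s) (\<delta> s) (\<lambda>t. reach_prob \<delta> T (memoryless \<gamma>) (P t) t)"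
    using s by (simp add: reach_prob_step shift)
  also have "\<dots> \<le> joint_expect (\<gamma> s) (\<xi>2 s) (\<delta> s) (\<lambda>t. val_sel \<gamma> t + e)"
    by (rule joint_expect_mono) (simp add: P_approx less_imp_le)
  also have "\<dots> = Pre_sel G1 G2 \<delta> \<gamma> \<xi>2 (val_sel \<gamma>) s + e"
    using \<gamma> \<xi>2 by (simp add: joint_expect_add_const Pre_sel_eq_joint_expect_selectors)
  finally show "val_sel \<gamma> s \<le> Pre_sel G1 G2 \<delta> \<gamma> \<xi>2 (val_sel \<gamma>) s + e" .
qed

lemma Pre1_sel_le_val_sel:
  assumes \<gamma>: "\<gamma> \<in> selectors G1" and s: "s \<notin> T"
  shows "Pre1_sel G1 G2 \<delta> \<gamma> (val_sel \<gamma>) s \<le> val_sel \<gamma> s"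
proof (rule field_le_epsilon)
  fix e :: real assume e: "0 < e"
  obtain \<pi>2 where \<pi>2: "\<pi>2 \<in> strategies G2"
    and approx: "reach_prob \<delta> T (memoryless \<gamma>) \<pi>2 s < val_sel \<gamma> s + e"
    using val1_strat_approx[OF e] by blast
  define \<xi>2 where "\<xi>2 = (unif_selector G2)(s := \<pi>2 [s])"
  have \<xi>2: "\<xi>2 \<in> selectors G2"
    unfolding \<xi>2_def using unif_selector_G2 strategies_support[OF \<pi>2, of "[s]"]
    by (simp add: fun_upd_selectors)
  have shift: "reach_prob \<delta> T (shift_strategy s (memoryless \<gamma>)) (shift_strategy s \<pi>2) =
      reach_prob \<delta> T (memoryless \<gamma>) (shift_strategy s \<pi>2)"
    by (rule ext, rule reach_prob_cong) (simp_all add: shift_strategy_memoryless)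
  have "Pre1_sel G1 G2 \<delta> \<gamma> (val_sel \<gamma>) s \<le> Pre_sel G1 G2 \<delta> \<gamma> \<xi>2 (val_sel \<gamma>) s"
    using \<xi>2 by (intro Pre1_sel_le_Pre_sel val1_strat_nonneg)
  also have "\<dots> = joint_expect (\<gamma> s) (\<pi>2 [s]) (\<delta> s) (val_sel \<gamma>)"
    using \<gamma> \<xi>2 by (simp add: Pre_sel_eq_joint_expect_selectors \<xi>2_def)
  also have "\<dots> \<le> joint_expect (\<gamma> s) (\<pi>2 [s]) (\<delta> s)
      (reach_prob \<delta> T (memoryless \<gamma>) (shift_strategy s \<pi>2))"
    using shift_strategy_strategies[OF \<pi>2] by (intro joint_expect_mono val1_strat_le_reach_prob)
  also have "\<dots> = reach_prob \<delta> T (memoryless \<gamma>) \<pi>2 s"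
    using s by (simp add: reach_prob_step shift)
  finally show "Pre1_sel G1 G2 \<delta> \<gamma> (val_sel \<gamma>) s \<le> val_sel \<gamma> s + e"
    using approx by simp
qed

subsection \<open>Super-fixpoints of the predecessor operator bound the value\<close>

context
  fixes v :: "'s \<Rightarrow> real"
  assumes v_nonneg: "\<And>t. 0 \<le> v t" and v_le_1: "\<And>t. v t \<le> 1"
    and Pre1_le: "\<And>s. Pre1 G1 G2 \<delta> v s \<le> v s"
begin

lemma super_fixpoint_reply:
  assumes "set_pmf p \<subseteq> G1 s" "e > 0"
  shows "\<exists>d. set_pmf d \<subseteq> G2 s \<and> Pre_sel G1 G2 \<delta> (\<lambda>_. p) (\<lambda>_. d) v s \<le> v s + e"
proof -
  define \<xi>1 where "\<xi>1 = (unif_selector G1)(s := p)"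
  have \<xi>1: "\<xi>1 \<in> selectors G1"
    unfolding \<xi>1_def using unif_selector_G1 assms(1) by (rule fun_upd_selectors)
  obtain \<xi>2 where \<xi>2: "\<xi>2 \<in> selectors G2"
    and approx: "Pre_sel G1 G2 \<delta> \<xi>1 \<xi>2 v s < Pre1_sel G1 G2 \<delta> \<xi>1 v s + e"
    by (rule Pre1_sel_approx[of v, OF v_nonneg assms(2)])
  have "Pre_sel G1 G2 \<delta> (\<lambda>_. p) (\<lambda>_. \<xi>2 s) v s = Pre_sel G1 G2 \<delta> \<xi>1 \<xi>2 v s"
    by (rule Pre_sel_cong) (simp_all add: \<xi>1_def)
  moreover have "Pre1_sel G1 G2 \<delta> \<xi>1 v s \<le> Pre1 G1 G2 \<delta> v s"
    using \<xi>1 v_nonneg v_le_1 by (rule Pre1_sel_le_Pre1)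
  ultimately have "Pre_sel G1 G2 \<delta> (\<lambda>_. p) (\<lambda>_. \<xi>2 s) v s \<le> v s + e"
    using approx Pre1_le[of s] by linarith
  with selectors_support[OF \<xi>2] show ?thesis by blast
qed

text \<open>Player 2's reply to \<open>\<pi>1\<close> that lets \<open>v\<close> increase in expectation by at most
  \<open>e / 2 ^ length h\<close> at history \<open>h\<close>; these errors sum to less than \<open>e\<close> along a play.\<close>

definition spoiler :: "('s,'m) strategy \<Rightarrow> real \<Rightarrow> ('s,'m) strategy" where
  "spoiler \<pi>1 e = (\<lambda>h. SOME d. set_pmf d \<subseteq> G2 (last h) \<and>
      Pre_sel G1 G2 \<delta> (\<lambda>_. \<pi>1 h) (\<lambda>_. d) v (last h) \<le> v (last h) + e / 2 ^ length h)"

lemma spoiler_spec: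
  assumes "\<pi>1 \<in> strategies G1" "e > 0" "h \<noteq> []"
  shows "set_pmf (spoiler \<pi>1 e h) \<subseteq> G2 (last h)"
    and "Pre_sel G1 G2 \<delta> (\<lambda>_. \<pi>1 h) (\<lambda>_. spoiler \<pi>1 e h) v (last h) \<le>
      v (last h) + e / 2 ^ length h"
proof -
  have "\<exists>d. set_pmf d \<subseteq> G2 (last h) \<and>
      Pre_sel G1 G2 \<delta> (\<lambda>_. \<pi>1 h) (\<lambda>_. d) v (last h) \<le> v (last h) + e / 2 ^ length h"
    using assms by (intro super_fixpoint_reply strategies_support) simp_all
  then have "set_pmf (spoiler \<pi>1 e h) \<subseteq> G2 (last h) \<and> Pre_sel G1 G2 \<delta> (\<lambda>_. \<pi>1 h)
      (\<lambda>_. spoiler \<pi>1 e h) v (last h) \<le> v (last h) + e / 2 ^ length h"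
    unfolding spoiler_def by (rule someI_ex)
  then show "set_pmf (spoiler \<pi>1 e h) \<subseteq> G2 (last h)"
    and "Pre_sel G1 G2 \<delta> (\<lambda>_. \<pi>1 h) (\<lambda>_. spoiler \<pi>1 e h) v (last h) \<le>
      v (last h) + e / 2 ^ length h"
    by (rule conjunct1, rule conjunct2)
qed

lemma spoiler_strategies:
  assumes "\<pi>1 \<in> strategies G1" "e > 0"
  shows "spoiler \<pi>1 e \<in> strategies G2"
  using spoiler_spec(1)[OF assms] unfolding strategies_def by blast

lemma shift_strategy_spoiler:
  assumes "h \<noteq> []"
  shows "shift_strategy s (spoiler \<pi>1 e) h = spoiler (shift_strategy s \<pi>1) (e / 2) h"
proof -
  have "e / 2 ^ length (s # h) = e / 2 / 2 ^ length h" by simp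
  then show ?thesis unfolding spoiler_def shift_strategy_def using assms by simp
qed

context
  assumes v_target: "\<And>t. t \<in> T \<Longrightarrow> v t = 1"
begin

lemma hit_prob_spoiler_le:
  assumes "\<pi>1 \<in> strategies G1" "e > 0"
  shows "hit_prob \<delta> T \<pi>1 (spoiler \<pi>1 e) s n \<le> v s + e"
  using assms
proof (induction n arbitrary: s \<pi>1 e)
  case 0
  then show ?case using v_target v_nonneg by (auto simp: hit_prob_0 add_nonneg_pos less_imp_le)
next
  case (Suc n)
  note \<pi>1 = \<open>\<pi>1 \<in> strategies G1\<close> and e = \<open>e > 0\<close>
  show ?case
  proof (cases "s \<in> T")
    case True
    then show ?thesis using v_target e by (simp add: hit_prob_Suc)
  next
    case False
    let ?\<pi>2 = "spoiler \<pi>1 e" and ?\<pi>2' = "spoiler (shift_strategy s \<pi>1) (e / 2)"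
    have shift: "hit_prob \<delta> T (shift_strategy s \<pi>1) (shift_strategy s ?\<pi>2) t n =
        hit_prob \<delta> T (shift_strategy s \<pi>1) ?\<pi>2' t n" for t
      by (rule hit_prob_cong) (simp_all add: shift_strategy_spoiler)
    have "Pre_sel G1 G2 \<delta> (\<lambda>_. \<pi>1 [s]) (\<lambda>_. ?\<pi>2 [s]) v s =
        joint_expect (\<pi>1 [s]) (?\<pi>2 [s]) (\<delta> s) v"
      using strategies_support[OF \<pi>1, of "[s]"] spoiler_spec(1)[OF \<pi>1 e, of "[s]"]
      by (intro Pre_sel_eq_joint_expect) simp_all
    then have step: "joint_expect (\<pi>1 [s]) (?\<pi>2 [s]) (\<delta> s) v \<le> v s + e / 2"
      using spoiler_spec(2)[OF \<pi>1 e, of "[s]"] by simp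
    have "hit_prob \<delta> T \<pi>1 ?\<pi>2 s (Suc n) =
        joint_expect (\<pi>1 [s]) (?\<pi>2 [s]) (\<delta> s) (\<lambda>t. hit_prob \<delta> T (shift_strategy s \<pi>1) ?\<pi>2' t n)"
      using False by (simp add: hit_prob_Suc shift)
    also have "\<dots> \<le> joint_expect (\<pi>1 [s]) (?\<pi>2 [s]) (\<delta> s) (\<lambda>t. v t + e / 2)"
      using Suc.IH shift_strategy_strategies[OF \<pi>1] e by (intro joint_expect_mono) simp
    also have "\<dots> \<le> v s + e"
      using step by (simp add: joint_expect_add_const)
    finally show ?thesis .
  qed
qed

lemma val1_le_super_fixpoint: "val1 G1 G2 \<delta> T s \<le> v s"
proof (rule val1_leI, rule field_le_epsilon)
  fix \<pi>1 and e :: real assume \<pi>1: "\<pi>1 \<in> strategies G1" and e: "e > 0"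
  have "val1_strat G2 \<delta> T \<pi>1 s \<le> reach_prob \<delta> T \<pi>1 (spoiler \<pi>1 e) s"
    using spoiler_strategies[OF \<pi>1 e] by (rule val1_strat_le_reach_prob)
  also have "\<dots> \<le> v s + e"
    using hit_prob_tendsto_reach_prob
    by (rule LIMSEQ_le_const2) (use hit_prob_spoiler_le[OF \<pi>1 e] in blast)
  finally show "val1_strat G2 \<delta> T \<pi>1 s \<le> v s + e" .
qed

end

end

subsection \<open>Traps and proper selectors\<close>

lemma val_sel_W2: "s \<in> W2 G1 G2 \<delta> T \<Longrightarrow> \<gamma> \<in> selectors G1 \<Longrightarrow> val_sel \<gamma> s = 0"
  using val1_strat_le_val1[OF memoryless_strategies] val1_strat_nonneg
  unfolding W2_def by (metis antisym mem_Collect_eq)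

lemma hit_prob_confined:
  assumes C: "C \<inter> T = {}" "\<And>s a. s \<in> C \<Longrightarrow> a \<in> G1 s \<Longrightarrow> set_pmf (\<delta> s a (b s)) \<subseteq> C"
    and "s \<in> C" "\<pi>1 \<in> strategies G1"
  shows "hit_prob \<delta> T \<pi>1 (\<lambda>h. return_pmf (b (last h))) s n = 0"
  using assms(3,4)
proof (induction n arbitrary: s \<pi>1)
  case 0
  then show ?case using C(1) by (auto simp: hit_prob_0)
next
  case (Suc n)
  let ?\<pi>2 = "\<lambda>h. return_pmf (b (last h))"
  have shift: "hit_prob \<delta> T (shift_strategy s \<pi>1) (shift_strategy s ?\<pi>2) t n =
      hit_prob \<delta> T (shift_strategy s \<pi>1) ?\<pi>2 t n" for t
    by (rule hit_prob_cong) (simp_all add: shift_strategy_def)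
  have "hit_prob \<delta> T \<pi>1 ?\<pi>2 s (Suc n) = joint_expect (\<pi>1 [s]) (return_pmf (b s)) (\<delta> s)
      (\<lambda>t. hit_prob \<delta> T (shift_strategy s \<pi>1) ?\<pi>2 t n)"
    using Suc.prems C(1) by (auto simp: hit_prob_Suc shift)
  also have "\<dots> \<le> 0"
  proof (rule joint_expect_return_le)
    fix a t assume "a \<in> set_pmf (\<pi>1 [s])" "t \<in> set_pmf (\<delta> s a (b s))"
    then have "t \<in> C" using C(2) Suc.prems strategies_support[of \<pi>1 G1 "[s]"] by auto
    then show "hit_prob \<delta> T (shift_strategy s \<pi>1) ?\<pi>2 t n \<le> 0"
      using Suc.IH shift_strategy_strategies[OF Suc.prems(2)] by simp
  qed
  finally show ?case using hit_prob_nonneg by (rule antisym)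
qed

lemma confined_subset_W2:
  assumes "C \<inter> T = {}" "\<And>s. b s \<in> G2 s" "\<And>s a. s \<in> C \<Longrightarrow> a \<in> G1 s \<Longrightarrow> set_pmf (\<delta> s a (b s)) \<subseteq> C"
  shows "C \<subseteq> W2 G1 G2 \<delta> T"
proof
  fix s assume s: "s \<in> C"
  let ?\<pi>2 = "\<lambda>h. return_pmf (b (last h))"
  have \<pi>2: "?\<pi>2 \<in> strategies G2" unfolding strategies_def using assms(2) by simp
  have "val1 G1 G2 \<delta> T s \<le> 0"
  proof (rule val1_leI)
    fix \<pi>1 assume \<pi>1: "\<pi>1 \<in> strategies G1"
    have "reach_prob \<delta> T \<pi>1 ?\<pi>2 s = 0"
      unfolding reach_prob_def hit_prob_def[symmetric]
      using hit_prob_confined[OF assms(1,3) s \<pi>1] by simp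
    then show "val1_strat G2 \<delta> T \<pi>1 s \<le> 0" using val1_strat_le_reach_prob[OF \<pi>2] by metis
  qed
  then show "s \<in> W2 G1 G2 \<delta> T" unfolding W2_def using val1_nonneg by (simp add: antisym)
qed

text \<open>Proper selectors, those without traps, reach \<open>T \<union> W2\<close> almost surely against
  every strategy of player 2 (lemma \<open>tendsto_max_avoid_0\<close> below).\<close>

definition trap :: "('s,'m) selector \<Rightarrow> 's set \<Rightarrow> bool" where
  "trap \<gamma> C \<longleftrightarrow> C \<noteq> {} \<and> C \<inter> (T \<union> W2 G1 G2 \<delta> T) = {} \<and>
     (\<forall>s\<in>C. \<exists>b\<in>G2 s. \<forall>a\<in>set_pmf (\<gamma> s). set_pmf (\<delta> s a b) \<subseteq> C)"

definition proper :: "('s,'m) selector \<Rightarrow> bool" where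
  "proper \<gamma> \<longleftrightarrow> \<not> (\<exists>C. trap \<gamma> C)"

lemma proper_unif_selector: "proper (unif_selector G1)"
  unfolding proper_def
proof
  assume "\<exists>C. trap (unif_selector G1) C"
  then obtain C where C: "trap (unif_selector G1) C" by blast
  have "\<forall>s. \<exists>b\<in>G2 s. s \<in> C \<longrightarrow> (\<forall>a\<in>G1 s. set_pmf (\<delta> s a b) \<subseteq> C)"
    using C G1_ne G2_ne unfolding trap_def unif_selector_def
    by (simp add: ex_in_conv[symmetric]) metis
  then obtain b where "\<And>s. b s \<in> G2 s" "\<And>s a. s \<in> C \<Longrightarrow> a \<in> G1 s \<Longrightarrow> set_pmf (\<delta> s a (b s)) \<subseteq> C"
    by metis
  moreover have "C \<inter> T = {}" using C unfolding trap_def by blast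
  ultimately have "C \<subseteq> W2 G1 G2 \<delta> T" using confined_subset_W2 by blast
  then show False using C unfolding trap_def by blast
qed

text \<open>The set \<open>I\<close> of states switched by an improvement step.\<close>

definition improvable :: "('s,'m) selector \<Rightarrow> 's set" where
  "improvable \<gamma> = {s. s \<notin> T \<union> W2 G1 G2 \<delta> T \<and> val_sel \<gamma> s < Pre1 G1 G2 \<delta> (val_sel \<gamma>) s}"

lemma Pre1_sel_le_confined:
  assumes "\<xi>1 \<in> selectors G1" "b \<in> G2 s" "\<forall>a\<in>set_pmf (\<xi>1 s). set_pmf (\<delta> s a b) \<subseteq> C"
    and "\<And>t. t \<in> C \<Longrightarrow> v t \<le> M" "\<And>t. 0 \<le> v t"
  shows "Pre1_sel G1 G2 \<delta> \<xi>1 v s \<le> M"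
proof -
  define \<xi>2 where "\<xi>2 = (unif_selector G2)(s := return_pmf b)"
  have \<xi>2: "\<xi>2 \<in> selectors G2"
    unfolding \<xi>2_def using unif_selector_G2 assms(2) by (simp add: fun_upd_selectors)
  have "Pre1_sel G1 G2 \<delta> \<xi>1 v s \<le> Pre_sel G1 G2 \<delta> \<xi>1 \<xi>2 v s"
    using assms(5) \<xi>2 by (rule Pre1_sel_le_Pre_sel)
  also have "\<dots> = joint_expect (\<xi>1 s) (return_pmf b) (\<delta> s) v"
    using assms(1) \<xi>2 by (simp add: Pre_sel_eq_joint_expect_selectors \<xi>2_def)
  also have "\<dots> \<le> M"
    using assms(3,4) by (intro joint_expect_return_le) blast
  finally show ?thesis .
qed

text \<open>By \<open>val_sel_le_Pre_sel\<close>, \<open>val_sel \<gamma> s\<close> is at most an average of the values at the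
  successors, so none of them can lie strictly below it.\<close>

lemma val_sel_confined_level:
  assumes \<gamma>: "\<gamma> \<in> selectors G1" and "s \<notin> T" and b: "b \<in> G2 s"
    and conf: "\<forall>a\<in>set_pmf (\<gamma> s). set_pmf (\<delta> s a b) \<subseteq> C"
    and max: "\<And>t. t \<in> C \<Longrightarrow> val_sel \<gamma> t \<le> val_sel \<gamma> s"
    and "a \<in> set_pmf (\<gamma> s)" "t \<in> set_pmf (\<delta> s a b)"
  shows "val_sel \<gamma> t = val_sel \<gamma> s"
proof (rule ccontr)
  assume "val_sel \<gamma> t \<noteq> val_sel \<gamma> s"
  then have less: "val_sel \<gamma> t < val_sel \<gamma> s"
    using assms(6,7) conf max by (meson order.not_eq_order_implies_strict subsetD)
  define \<xi>2 where "\<xi>2 = (unif_selector G2)(s := return_pmf b)"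
  have \<xi>2: "\<xi>2 \<in> selectors G2"
    unfolding \<xi>2_def using unif_selector_G2 b by (simp add: fun_upd_selectors)
  have "val_sel \<gamma> s \<le> Pre_sel G1 G2 \<delta> \<gamma> \<xi>2 (val_sel \<gamma>) s"
    using \<gamma> \<open>s \<notin> T\<close> \<xi>2 by (rule val_sel_le_Pre_sel)
  also have "\<dots> = joint_expect (\<gamma> s) (return_pmf b) (\<delta> s) (val_sel \<gamma>)"
    using \<gamma> \<xi>2 by (simp add: Pre_sel_eq_joint_expect_selectors \<xi>2_def)
  also have "\<dots> < val_sel \<gamma> s"
    using conf max assms(6,7) less by (intro joint_expect_return_less) blast+
  finally show False by simp
qed

text \<open>A trap for the improved selector would contain a maximal level set of \<open>val_sel \<gamma>\<close>, and
  this level set is a trap for \<open>\<gamma>\<close>.\<close>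

lemma proper_improve:
  assumes \<gamma>: "\<gamma> \<in> selectors G1" "proper \<gamma>" and \<gamma>': "\<gamma>' \<in> selectors G1"
    and same: "\<And>s. s \<notin> improvable \<gamma> \<Longrightarrow> \<gamma>' s = \<gamma> s"
    and better: "\<And>s. s \<in> improvable \<gamma> \<Longrightarrow> val_sel \<gamma> s < Pre1_sel G1 G2 \<delta> \<gamma>' (val_sel \<gamma>) s"
  shows "proper \<gamma>'"
  unfolding proper_def
proof
  assume "\<exists>C. trap \<gamma>' C"
  then obtain C where C: "trap \<gamma>' C" by blast
  let ?v = "val_sel \<gamma>"
  define M where "M = Max (?v ` C)"
  have "C \<noteq> {}" and C_TW2: "C \<inter> (T \<union> W2 G1 G2 \<delta> T) = {}" using C unfolding trap_def by auto
  then have "M \<in> ?v ` C" unfolding M_def by simp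
  have le_M: "t \<in> C \<Longrightarrow> ?v t \<le> M" for t unfolding M_def by simp
  have "trap \<gamma> {s\<in>C. ?v s = M}"
    unfolding trap_def
  proof (intro conjI ballI)
    show "{s\<in>C. ?v s = M} \<noteq> {}" using \<open>M \<in> ?v ` C\<close> by auto
    show "{s\<in>C. ?v s = M} \<inter> (T \<union> W2 G1 G2 \<delta> T) = {}" using C_TW2 by auto
  next
    fix s assume s: "s \<in> {s\<in>C. ?v s = M}"
    obtain b where b: "b \<in> G2 s" and conf: "\<forall>a\<in>set_pmf (\<gamma>' s). set_pmf (\<delta> s a b) \<subseteq> C"
      using C s unfolding trap_def by blast
    have "s \<notin> improvable \<gamma>"
    proof
      assume "s \<in> improvable \<gamma>"
      then have "?v s < Pre1_sel G1 G2 \<delta> \<gamma>' ?v s" by (rule better)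
      also have "\<dots> \<le> M"
        using \<gamma>' b conf le_M val1_strat_nonneg by (rule Pre1_sel_le_confined)
      finally show False using s by simp
    qed
    then have conf_\<gamma>: "\<forall>a\<in>set_pmf (\<gamma> s). set_pmf (\<delta> s a b) \<subseteq> C" using conf same by simp
    have "s \<notin> T" using s C_TW2 by blast
    show "\<exists>b\<in>G2 s. \<forall>a\<in>set_pmf (\<gamma> s). set_pmf (\<delta> s a b) \<subseteq> {s\<in>C. ?v s = M}"
      using val_sel_confined_level[OF \<gamma>(1) \<open>s \<notin> T\<close> b conf_\<gamma>] s conf_\<gamma> le_M b by blast
  qed
  then show False using \<gamma>(2) unfolding proper_def by blast
qed

subsection \<open>Proper selectors reach \<open>T \<union> W2\<close> almost surely\<close>

definition avoid_step :: "('s,'m) selector \<Rightarrow> ('s \<Rightarrow> real) \<Rightarrow> 's \<Rightarrow> real" where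
  "avoid_step \<gamma> x s = (if s \<in> T \<union> W2 G1 G2 \<delta> T then 0
     else Max ((\<lambda>b. joint_expect (\<gamma> s) (return_pmf b) (\<delta> s) x) ` G2 s))"

text \<open>An upper bound, uniform in player 2's strategy, on the probability that the play under \<open>\<gamma>\<close>
  avoids \<open>T \<union> W2\<close> for \<open>n\<close> steps (lemma \<open>avoid_prob_le_max_avoid\<close>).\<close>

definition max_avoid :: "('s,'m) selector \<Rightarrow> nat \<Rightarrow> 's \<Rightarrow> real" where
  "max_avoid \<gamma> n = (avoid_step \<gamma> ^^ n) (\<lambda>_. 1)"

lemma max_avoid_0: "max_avoid \<gamma> 0 = (\<lambda>_. 1)"
  by (simp add: max_avoid_def)

lemma max_avoid_Suc: "max_avoid \<gamma> (Suc n) = avoid_step \<gamma> (max_avoid \<gamma> n)"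
  by (simp add: max_avoid_def)

lemma avoid_step_mono:
  assumes "\<And>t. x t \<le> y t"
  shows "avoid_step \<gamma> x s \<le> avoid_step \<gamma> y s"
proof -
  let ?e = "\<lambda>x b. joint_expect (\<gamma> s) (return_pmf b) (\<delta> s) x"
  have "?e x b \<le> Max (?e y ` G2 s)" if "b \<in> G2 s" for b
  proof -
    have "?e x b \<le> ?e y b" using assms by (rule joint_expect_mono)
    also have "\<dots> \<le> Max (?e y ` G2 s)" using that by simp
    finally show ?thesis .
  qed
  then have "Max (?e x ` G2 s) \<le> Max (?e y ` G2 s)"
    using G2_ne[of s] by (intro Max.boundedI) auto
  then show ?thesis unfolding avoid_step_def by simp
qed

lemma avoid_step_nonneg: "(\<And>t. 0 \<le> x t) \<Longrightarrow> 0 \<le> avoid_step \<gamma> x s"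
  unfolding avoid_step_def using G2_ne[of s] by (auto simp: Max_ge_iff joint_expect_nonneg)

lemma avoid_step_le_1: "(\<And>t. x t \<le> 1) \<Longrightarrow> avoid_step \<gamma> x s \<le> 1"
  unfolding avoid_step_def using G2_ne[of s] by (auto simp: Max_le_iff joint_expect_le_const)

lemma max_avoid_nonneg: "0 \<le> max_avoid \<gamma> n s"
  by (induction n arbitrary: s) (simp_all add: max_avoid_0 max_avoid_Suc avoid_step_nonneg)

lemma decseq_max_avoid: "decseq (\<lambda>n. max_avoid \<gamma> n s)"
proof (rule decseq_SucI)
  show "max_avoid \<gamma> (Suc n) s \<le> max_avoid \<gamma> n s" for n
  proof (induction n arbitrary: s)
    case 0
    then show ?case by (simp add: max_avoid_0 max_avoid_Suc avoid_step_le_1)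
  next
    case (Suc n)
    then show ?case unfolding max_avoid_Suc[of \<gamma> "Suc n"] max_avoid_Suc[of \<gamma> n]
      by (rule avoid_step_mono)
  qed
qed

text \<open>The maximal level set of a positive fixpoint of \<open>avoid_step \<gamma>\<close> is a trap: the maximum is
  attained only by a move of player 2 from which all successors stay on the level set.\<close>

lemma avoid_step_fixpoint_trap:
  assumes fixpoint: "avoid_step \<gamma> x = x" and pos: "0 < x s"
  shows "trap \<gamma> {t. x t = Max (range x)}"
proof -
  let ?M = "Max (range x)" and ?C = "{t. x t = Max (range x)}"
  have le_M: "x t \<le> ?M" for t by simp
  have "?M \<in> range x" by (rule Max_in) simp_all
  then have "?C \<noteq> {}" by (metis (mono_tags, lifting) empty_iff mem_Collect_eq rangeE)
  have "0 < ?M" using pos le_M[of s] by linarith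
  then have not_TW2: "t \<notin> T \<union> W2 G1 G2 \<delta> T" if "t \<in> ?C" for t
    using that fun_cong[OF fixpoint, of t] by (auto simp: avoid_step_def)
  have "\<exists>b\<in>G2 t. \<forall>a\<in>set_pmf (\<gamma> t). set_pmf (\<delta> t a b) \<subseteq> ?C" if t: "t \<in> ?C" for t
  proof -
    let ?e = "\<lambda>b. joint_expect (\<gamma> t) (return_pmf b) (\<delta> t) x"
    have "Max (?e ` G2 t) = ?M"
      using t not_TW2[OF t] fun_cong[OF fixpoint, of t] by (simp add: avoid_step_def)
    moreover have "Max (?e ` G2 t) \<in> ?e ` G2 t" using G2_ne[of t] by simp
    ultimately obtain b where b: "b \<in> G2 t" "?e b = ?M" by auto
    have "set_pmf (\<delta> t a b) \<subseteq> ?C" if "a \<in> set_pmf (\<gamma> t)" for a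
    proof
      fix u assume u: "u \<in> set_pmf (\<delta> t a b)"
      show "u \<in> ?C"
      proof (rule ccontr)
        assume "u \<notin> ?C"
        then have "x u < ?M" using le_M[of u] by (simp add: order.strict_iff_order)
        then have "?e b < ?M"
          by (intro joint_expect_return_less[where a=a and t=u]) (use le_M that u in auto)
        with b(2) show False by simp
      qed
    qed
    with b(1) show ?thesis by blast
  qed
  then show ?thesis unfolding trap_def using \<open>?C \<noteq> {}\<close> not_TW2 by blast
qed

lemma tendsto_max_avoid_0:
  assumes "proper \<gamma>"
  shows "(\<lambda>n. max_avoid \<gamma> n s) \<longlonglongrightarrow> 0"
proof -
  define x where "x t = (INF n. max_avoid \<gamma> n t)" for t
  have lim: "(\<lambda>n. max_avoid \<gamma> n t) \<longlonglongrightarrow> x t" for t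
    unfolding x_def
    by (rule LIMSEQ_decseq_INF) (auto intro!: decseq_max_avoid bdd_belowI[of _ 0] max_avoid_nonneg)
  have "(\<lambda>n. max_avoid \<gamma> (Suc n) t) \<longlonglongrightarrow> avoid_step \<gamma> x t" for t
    unfolding max_avoid_Suc avoid_step_def
    by (auto intro!: tendsto_Max_image tendsto_joint_expect lim G2_ne)
  moreover have "(\<lambda>n. max_avoid \<gamma> (Suc n) t) \<longlonglongrightarrow> x t" for t
    using lim by (rule LIMSEQ_Suc)
  ultimately have "avoid_step \<gamma> x = x"
    by (intro ext LIMSEQ_unique)
  moreover have "0 \<le> x t" for t
    using lim by (rule LIMSEQ_le_const) (simp add: max_avoid_nonneg)
  ultimately have "x s = 0"
    using avoid_step_fixpoint_trap assms unfolding proper_def by (metis less_eq_real_def)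
  then show ?thesis using lim[of s] by simp
qed

lemma avoid_prob_le_max_avoid:
  assumes "\<pi>2 \<in> strategies G2"
  shows "1 - hit_prob \<delta> (T \<union> W2 G1 G2 \<delta> T) (memoryless \<gamma>) \<pi>2 s n \<le> max_avoid \<gamma> n s"
  using assms
proof (induction n arbitrary: s \<pi>2)
  case 0
  then show ?case by (simp add: max_avoid_0 hit_prob_nonneg)
next
  case (Suc n)
  let ?TW2 = "T \<union> W2 G1 G2 \<delta> T"
  show ?case
  proof (cases "s \<in> ?TW2")
    case True
    then show ?thesis by (simp add: hit_prob_Suc max_avoid_nonneg)
  next
    case False
    have "1 - hit_prob \<delta> ?TW2 (memoryless \<gamma>) \<pi>2 s (Suc n) = joint_expect (\<gamma> s) (\<pi>2 [s]) (\<delta> s)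
        (\<lambda>t. 1 - hit_prob \<delta> ?TW2 (memoryless \<gamma>) (shift_strategy s \<pi>2) t n)"
      using False by (simp add: hit_prob_Suc_memoryless joint_expect_diff)
    also have "\<dots> \<le> joint_expect (\<gamma> s) (\<pi>2 [s]) (\<delta> s) (max_avoid \<gamma> n)"
      using Suc.IH shift_strategy_strategies[OF Suc.prems] by (intro joint_expect_mono) blast
    also have "\<dots> \<le> Max ((\<lambda>b. joint_expect (\<gamma> s) (return_pmf b) (\<delta> s) (max_avoid \<gamma> n)) ` G2 s)"
      using strategies_support[OF Suc.prems, of "[s]"] by (intro joint_expect_le_Max_pure) simp_all
    also have "\<dots> = max_avoid \<gamma> (Suc n) s"
      using False by (simp add: max_avoid_Suc avoid_step_def)
    finally show ?thesis .
  qed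
qed

context
  fixes \<gamma> :: "('s,'m) selector" and v :: "'s \<Rightarrow> real"
  assumes \<gamma>: "\<gamma> \<in> selectors G1" and v_le_1: "\<And>t. v t \<le> 1"
    and v_W2: "\<And>t. t \<in> W2 G1 G2 \<delta> T \<Longrightarrow> v t = 0"
    and le_Pre_sel: "\<And>s \<xi>2. s \<notin> T \<union> W2 G1 G2 \<delta> T \<Longrightarrow> \<xi>2 \<in> selectors G2 \<Longrightarrow>
      v s \<le> Pre_sel G1 G2 \<delta> \<gamma> \<xi>2 v s"
begin

text \<open>\<open>v\<close> is a submartingale until \<open>T \<union> W2\<close> is hit, and there it is at most the indicator
  of \<open>T\<close>.\<close>

lemma sub_fixpoint_le_hit_prob:
  assumes "\<pi>2 \<in> strategies G2"
  shows "v s \<le> hit_prob \<delta> T (memoryless \<gamma>) \<pi>2 s n +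
      (1 - hit_prob \<delta> (T \<union> W2 G1 G2 \<delta> T) (memoryless \<gamma>) \<pi>2 s n)"
  using assms
proof (induction n arbitrary: s \<pi>2)
  case 0
  show ?case using v_le_1[of s] v_W2[of s] by (auto simp: hit_prob_0)
next
  case (Suc n)
  let ?TW2 = "T \<union> W2 G1 G2 \<delta> T"
    and ?h = "\<lambda>A t. hit_prob \<delta> A (memoryless \<gamma>) (shift_strategy s \<pi>2) t n"
  show ?case
  proof (cases "s \<in> ?TW2")
    case True
    then show ?thesis
      using v_le_1[of s] v_W2[of s]
      by (auto simp: hit_prob_Suc intro!: joint_expect_nonneg hit_prob_nonneg)
  next
    case False
    define \<xi>2 where "\<xi>2 = (unif_selector G2)(s := \<pi>2 [s])"
    have \<xi>2: "\<xi>2 \<in> selectors G2"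
      unfolding \<xi>2_def using unif_selector_G2 strategies_support[OF Suc.prems, of "[s]"]
      by (simp add: fun_upd_selectors)
    have "v s \<le> joint_expect (\<gamma> s) (\<pi>2 [s]) (\<delta> s) v"
      using le_Pre_sel[OF False \<xi>2] \<gamma> \<xi>2 by (simp add: Pre_sel_eq_joint_expect_selectors \<xi>2_def)
    also have "\<dots> \<le> joint_expect (\<gamma> s) (\<pi>2 [s]) (\<delta> s) (\<lambda>t. ?h T t + (1 - ?h ?TW2 t))"
      using Suc.IH shift_strategy_strategies[OF Suc.prems] by (intro joint_expect_mono) blast
    also have "\<dots> = hit_prob \<delta> T (memoryless \<gamma>) \<pi>2 s (Suc n) +
        (1 - hit_prob \<delta> ?TW2 (memoryless \<gamma>) \<pi>2 s (Suc n))"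
      using False by (simp add: hit_prob_Suc_memoryless joint_expect_add joint_expect_diff)
    finally show ?thesis .
  qed
qed

lemma sub_fixpoint_le_val_sel:
  assumes "proper \<gamma>"
  shows "v s \<le> val_sel \<gamma> s"
  unfolding val1_strat_def
proof (rule cINF_greatest[OF strategies_G2_ne])
  fix \<pi>2 assume \<pi>2: "\<pi>2 \<in> strategies G2"
  have "v s - max_avoid \<gamma> n s \<le> reach_prob \<delta> T (memoryless \<gamma>) \<pi>2 s" for n
    using sub_fixpoint_le_hit_prob[OF \<pi>2, of s n] avoid_prob_le_max_avoid[OF \<pi>2, of \<gamma> s n]
      hit_prob_le_reach_prob[of \<delta> T "memoryless \<gamma>" \<pi>2 s n]
    by linarith
  moreover have "(\<lambda>n. v s - max_avoid \<gamma> n s) \<longlonglongrightarrow> v s"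
    using tendsto_diff[OF tendsto_const tendsto_max_avoid_0[OF assms]] by simp
  ultimately show "v s \<le> reach_prob \<delta> T (memoryless \<gamma>) \<pi>2 s"
    by (intro LIMSEQ_le_const2[where X="\<lambda>n. v s - max_avoid \<gamma> n s"]) auto
qed

end

end

locale reach_game = game G1 G2 \<delta> T
  for G1 G2 :: "'s::finite \<Rightarrow> 'm::finite set"
    and \<delta> :: "'s \<Rightarrow> 'm \<Rightarrow> 'm \<Rightarrow> 's pmf"
    and T :: "'s set" +
  assumes absorbing_T_W2: "\<And>s. s \<in> T \<union> W2 G1 G2 \<delta> T \<Longrightarrow> absorbing G1 G2 \<delta> s"
begin

lemma improve_stepD:
  assumes "improve_step G1 G2 \<delta> T \<gamma> \<gamma>'" "\<gamma> \<in> selectors G1"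
  shows "\<gamma>' \<in> selectors G1"
    and "\<And>s. s \<notin> improvable \<gamma> \<Longrightarrow> \<gamma>' s = \<gamma> s"
    and "\<And>s. s \<in> improvable \<gamma> \<Longrightarrow>
      Pre1_sel G1 G2 \<delta> \<gamma>' (val_sel \<gamma>) s = Pre1 G1 G2 \<delta> (val_sel \<gamma>) s"
proof -
  obtain \<xi>1 where \<xi>1: "\<xi>1 \<in> selectors G1"
    and opt: "\<forall>s\<in>improvable \<gamma>. Pre1_sel G1 G2 \<delta> \<xi>1 (val_sel \<gamma>) s = Pre1 G1 G2 \<delta> (val_sel \<gamma>) s"
    and \<gamma>': "\<gamma>' = (\<lambda>s. if s \<in> improvable \<gamma> then \<xi>1 s else \<gamma> s)"
    using assms(1) unfolding improve_step_def improvable_def Let_def by blast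
  show "\<gamma>' \<in> selectors G1"
    using \<xi>1 assms(2) unfolding \<gamma>' selectors_def by simp
  show "\<gamma>' s = \<gamma> s" if "s \<notin> improvable \<gamma>" for s
    using that by (simp add: \<gamma>')
  show "Pre1_sel G1 G2 \<delta> \<gamma>' (val_sel \<gamma>) s = Pre1 G1 G2 \<delta> (val_sel \<gamma>) s"
    if "s \<in> improvable \<gamma>" for s
    using that opt by (simp add: \<gamma>' Pre1_sel_def Pre_sel_def)
qed

lemma improve_step_proper:
  assumes "improve_step G1 G2 \<delta> T \<gamma> \<gamma>'" "\<gamma> \<in> selectors G1" "proper \<gamma>"
  shows "proper \<gamma>'"
proof (rule proper_improve)
  show "val_sel \<gamma> s < Pre1_sel G1 G2 \<delta> \<gamma>' (val_sel \<gamma>) s" if "s \<in> improvable \<gamma>" for s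
    using that improve_stepD(3)[OF assms(1,2) that] by (simp add: improvable_def)
qed (use assms improve_stepD[OF assms(1,2)] in auto)

lemma val_sel_improve_step_mono:
  assumes step: "improve_step G1 G2 \<delta> T \<gamma> \<gamma>'" and \<gamma>: "\<gamma> \<in> selectors G1" "proper \<gamma>"
  shows "val_sel \<gamma> s \<le> val_sel \<gamma>' s"
proof (rule sub_fixpoint_le_val_sel)
  note \<gamma>' = improve_stepD[OF step \<gamma>(1)]
  show "\<gamma>' \<in> selectors G1" "proper \<gamma>'"
    using \<gamma>'(1) improve_step_proper[OF step \<gamma>] .
  show "val_sel \<gamma> t \<le> 1" "t \<in> W2 G1 G2 \<delta> T \<Longrightarrow> val_sel \<gamma> t = 0" for t
    using val1_strat_le_1 val_sel_W2 \<gamma>(1) by blast+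
  fix t \<xi>2 assume t: "t \<notin> T \<union> W2 G1 G2 \<delta> T" and \<xi>2: "\<xi>2 \<in> selectors G2"
  show "val_sel \<gamma> t \<le> Pre_sel G1 G2 \<delta> \<gamma>' \<xi>2 (val_sel \<gamma>) t"
  proof (cases "t \<in> improvable \<gamma>")
    case True
    then have "val_sel \<gamma> t < Pre1_sel G1 G2 \<delta> \<gamma>' (val_sel \<gamma>) t"
      using \<gamma>'(3) by (simp add: improvable_def)
    also have "\<dots> \<le> Pre_sel G1 G2 \<delta> \<gamma>' \<xi>2 (val_sel \<gamma>) t"
      using \<xi>2 by (intro Pre1_sel_le_Pre_sel val1_strat_nonneg)
    finally show ?thesis by simp
  next
    case False
    then have "Pre_sel G1 G2 \<delta> \<gamma>' \<xi>2 (val_sel \<gamma>) t = Pre_sel G1 G2 \<delta> \<gamma> \<xi>2 (val_sel \<gamma>) t"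
      using \<gamma>'(2) by (intro Pre_sel_cong) simp_all
    moreover have "val_sel \<gamma> t \<le> Pre_sel G1 G2 \<delta> \<gamma> \<xi>2 (val_sel \<gamma>) t"
      using \<gamma>(1) _ \<xi>2 by (rule val_sel_le_Pre_sel) (use t in blast)
    ultimately show ?thesis by simp
  qed
qed

lemma Pre1_le_val_sel_improve_step:
  assumes step: "improve_step G1 G2 \<delta> T \<gamma> \<gamma>'" and \<gamma>: "\<gamma> \<in> selectors G1" "proper \<gamma>"
  shows "Pre1 G1 G2 \<delta> (val_sel \<gamma>) s \<le> val_sel \<gamma>' s"
proof -
  note mono = val_sel_improve_step_mono[OF step \<gamma>]
  consider "s \<in> T \<union> W2 G1 G2 \<delta> T" | "s \<in> improvable \<gamma>"
    | "s \<notin> T \<union> W2 G1 G2 \<delta> T" "s \<notin> improvable \<gamma>"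
    by blast
  then show ?thesis
  proof cases
    case 1
    then show ?thesis using mono by (simp add: Pre1_absorbing absorbing_T_W2)
  next
    case 2
    have \<gamma>': "\<gamma>' \<in> selectors G1" by (rule improve_stepD(1)[OF step \<gamma>(1)])
    have "Pre1 G1 G2 \<delta> (val_sel \<gamma>) s = Pre1_sel G1 G2 \<delta> \<gamma>' (val_sel \<gamma>) s"
      using improve_stepD(3)[OF step \<gamma>(1) 2] by simp
    also have "\<dots> \<le> Pre1_sel G1 G2 \<delta> \<gamma>' (val_sel \<gamma>') s"
      using \<gamma>' val1_strat_nonneg mono by (rule Pre1_sel_mono)
    also have "\<dots> \<le> val_sel \<gamma>' s"
      using \<gamma>' by (rule Pre1_sel_le_val_sel) (use 2 in \<open>simp add: improvable_def\<close>)
    finally show ?thesis .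
  next
    case 3
    then show ?thesis using mono[of s] by (simp add: improvable_def)
  qed
qed

lemma Pre1_le_val_sel_if_not_improvable:
  assumes "improvable \<gamma> = {}"
  shows "Pre1 G1 G2 \<delta> (val_sel \<gamma>) s \<le> val_sel \<gamma> s"
  using assms absorbing_T_W2[of s] unfolding improvable_def
  by (cases "s \<in> T \<union> W2 G1 G2 \<delta> T") (auto simp: Pre1_absorbing)

subsection \<open>Runs of the algorithm\<close>

context
  fixes \<gamma> :: "nat \<Rightarrow> ('s,'m) selector"
  assumes run: "algo_run G1 G2 \<delta> T \<gamma>"
begin

lemma run_step: "improve_step G1 G2 \<delta> T (\<gamma> i) (\<gamma> (Suc i))"
  using run unfolding algo_run_def by blast

lemma run_selectors_proper: "\<gamma> i \<in> selectors G1 \<and> proper (\<gamma> i)"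
proof (induction i)
  case 0
  then show ?case using run unif_selector_G1 proper_unif_selector unfolding algo_run_def by simp
next
  case (Suc i)
  then show ?case using improve_stepD(1) improve_step_proper run_step by blast
qed

lemma run_strict_improvable:
  "s \<in> improvable (\<gamma> i) \<Longrightarrow> val_sel (\<gamma> i) s < val_sel (\<gamma> (Suc i)) s"
  using Pre1_le_val_sel_improve_step[OF run_step] run_selectors_proper
  unfolding improvable_def by (fastforce intro: less_le_trans)

lemma run_strat_le: "strat_le G2 \<delta> T (memoryless (\<gamma> i)) (memoryless (\<gamma> (Suc i)))"
proof (cases "\<gamma> (Suc i) = \<gamma> i")
  case False
  then obtain s where "s \<in> improvable (\<gamma> i)"
    using improve_stepD(2)[OF run_step] run_selectors_proper by blast
  then show ?thesis
    using run_strict_improvable val_sel_improve_step_mono[OF run_step] run_selectors_proper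
    unfolding strat_le_def strat_less_def by blast
qed (simp add: strat_le_def)

lemma run_stable_optimal:
  assumes "memoryless (\<gamma> i) = memoryless (\<gamma> (Suc i))"
  shows "val_sel (\<gamma> i) = val1 G1 G2 \<delta> T"
proof
  fix s
  have "improvable (\<gamma> i) = {}"
    using run_strict_improvable[of _ i] assms unfolding memoryless_eq_iff by force
  then have "val1 G1 G2 \<delta> T s \<le> val_sel (\<gamma> i) s"
    by (intro val1_le_super_fixpoint val1_strat_nonneg val1_strat_le_1 val1_strat_target
        Pre1_le_val_sel_if_not_improvable)
  moreover have "val_sel (\<gamma> i) s \<le> val1 G1 G2 \<delta> T s"
    using run_selectors_proper by (intro val1_strat_le_val1 memoryless_strategies) blast
  ultimately show "val_sel (\<gamma> i) s = val1 G1 G2 \<delta> T s" by simp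
qed

lemma run_tendsto_val1: "(\<lambda>i. val_sel (\<gamma> i) s) \<longlonglongrightarrow> val1 G1 G2 \<delta> T s"
proof -
  define L where "L t = (SUP i. val_sel (\<gamma> i) t)" for t
  have inc: "incseq (\<lambda>i. val_sel (\<gamma> i) t)" for t
    using val_sel_improve_step_mono[OF run_step] run_selectors_proper by (intro incseq_SucI) blast
  have lim: "(\<lambda>i. val_sel (\<gamma> i) t) \<longlonglongrightarrow> L t" for t
    unfolding L_def using inc
    by (rule LIMSEQ_incseq_SUP[rotated]) (auto intro!: bdd_aboveI val1_strat_le_1)
  have le_val1: "val_sel (\<gamma> i) t \<le> val1 G1 G2 \<delta> T t" for i t
    using run_selectors_proper by (intro val1_strat_le_val1 memoryless_strategies) blast
  have "val1 G1 G2 \<delta> T s \<le> L s"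
  proof (rule val1_le_super_fixpoint)
    show "0 \<le> L t" for t
      using lim by (rule LIMSEQ_le_const) (simp add: val1_strat_nonneg)
    show "L t \<le> 1" for t
      using lim by (rule LIMSEQ_le_const2) (simp add: val1_strat_le_1)
    show "L t = 1" if "t \<in> T" for t
      using lim[of t] that by (simp add: val1_strat_target LIMSEQ_const_iff)
    show "Pre1 G1 G2 \<delta> L t \<le> L t" for t
      using val1_strat_nonneg val1_strat_le_1 inc lim
    proof (rule Pre1_le_limit)
      show "Pre1 G1 G2 \<delta> (val_sel (\<gamma> i)) u \<le> val_sel (\<gamma> (Suc i)) u" for i u
        using Pre1_le_val_sel_improve_step[OF run_step] run_selectors_proper by blast
    qed
  qed
  moreover have "L s \<le> val1 G1 G2 \<delta> T s"
    using lim by (rule LIMSEQ_le_const2) (simp add: le_val1)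
  ultimately show ?thesis using lim[of s] by simp
qed

end

end

theorem theorem3:
  fixes G1 G2 :: "'s::finite \<Rightarrow> 'm::finite set"
    and \<delta> :: "'s \<Rightarrow> 'm \<Rightarrow> 'm \<Rightarrow> 's pmf"
    and T :: "'s set"
    and \<gamma> :: "nat \<Rightarrow> ('s,'m) selector"
  assumes G1_ne: "\<And>s. G1 s \<noteq> {}"
    and G2_ne: "\<And>s. G2 s \<noteq> {}"
    and absorb: "\<And>s. s \<in> T \<union> W2 G1 G2 \<delta> T \<Longrightarrow> absorbing G1 G2 \<delta> s"
    and run: "algo_run G1 G2 \<delta> T \<gamma>"
  shows "(\<forall>i. strat_le G2 \<delta> T (memoryless (\<gamma> i)) (memoryless (\<gamma> (Suc i))) \<and>
              (memoryless (\<gamma> i) = memoryless (\<gamma> (Suc i)) \<longrightarrow>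
                 val1_strat G2 \<delta> T (memoryless (\<gamma> i)) = val1 G1 G2 \<delta> T)) \<and>
         (\<forall>s. (\<lambda>i. val1_strat G2 \<delta> T (memoryless (\<gamma> i)) s) \<longlonglongrightarrow> val1 G1 G2 \<delta> T s)"
proof -
  interpret reach_game G1 G2 \<delta> T
    using G1_ne G2_ne absorb by unfold_locales
  show ?thesis
    using run_strat_le[OF run] run_stable_optimal[OF run] run_tendsto_val1[OF run] by blast
qed

end
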